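(* For a Tychonoff space $X$, the following conditions are equivalent: (1) $C_p(X)$ is distinguished. (2) Every countable partition of $X$ admits a point-finite open expansion in $X$. (3) Every countable collection of pairwise disjoint subsets of $X$ admits a point-finite open expansion in $X$. (4) $X$ is a $\Delta$-space.
   Context: $C_p(X)$ denotes the vector space of all continuous real-valued functions on $X$ with the topology of pointwise convergence. A locally convex space $E$ is distinguished if its strong dual (the topological dual of $E$ with the topology of uniform convergence on bounded subsets of $E$) is barrelled. A partition of $X$ is a cover of $X$ by pairwise disjoint sets. A collection $\{U_\gamma:\gamma\in\Gamma\}$ is an expansion of a collection $\{X_\gamma:\gamma\in\Gamma\}$ in $X$ if $X_\gamma\subseteq U_\gamma\subseteq X$ for every $\gamma$; it is an open expansion if all $U_\gamma$ are open in $X$; it is point-finite if no point of $X$ belongs to infinitely many $U_\gamma$. A topological space $X$ is a $\Delta$-space if for every decreasing sequence $\{D_n:n\in\omega\}$ of subsets of $X$ with $\bigcap_n D_n=\emptyset$ there is a decreasing sequence $\{V_n:n\in\omega\}$ of open subsets of $X$ with $D_n\subseteq V_n$ for all $n$ and $\bigcap_n V_n=\emptyset$. All spaces are Tychonoff and infinite. *)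

theory Defs
  imports "HOL-Analysis.Analysis"
begin

text \<open>Real vector spaces are represented as linear subspaces V of a function space
  'b \<Rightarrow> real with pointwise operations, equipped with a topology T (topspace T = V).\<close>

definition zero_fun :: "'b \<Rightarrow> real" where
  "zero_fun = (\<lambda>x. 0)"

definition fscale :: "real \<Rightarrow> ('b \<Rightarrow> real) \<Rightarrow> ('b \<Rightarrow> real)" where
  "fscale c f = (\<lambda>x. c * f x)"

definition tvs_bounded :: "('b \<Rightarrow> real) topology \<Rightarrow> ('b \<Rightarrow> real) set \<Rightarrow> bool" where
  "tvs_bounded T B \<longleftrightarrow> B \<subseteq> topspace T \<and>
     (\<forall>U. openin T U \<and> zero_fun \<in> U \<longrightarrow> (\<exists>t>0. B \<subseteq> fscale t ` U))"

definition tvs_dual :: "('b \<Rightarrow> real) topology \<Rightarrow> (('b \<Rightarrow> real) \<Rightarrow> real) set" where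
  "tvs_dual T = {\<phi>. continuous_map T euclideanreal \<phi>
      \<and> (\<forall>f\<in>topspace T. \<forall>g\<in>topspace T. \<phi> (\<lambda>x. f x + g x) = \<phi> f + \<phi> g)
      \<and> (\<forall>f\<in>topspace T. \<forall>c. \<phi> (fscale c f) = c * \<phi> f)
      \<and> (\<forall>f. f \<notin> topspace T \<longrightarrow> \<phi> f = 0)}"

definition strong_dual_topology :: "('b \<Rightarrow> real) topology \<Rightarrow> (('b \<Rightarrow> real) \<Rightarrow> real) topology" where
  "strong_dual_topology T = topology_generated_by
     ({{\<psi> \<in> tvs_dual T. (SUP f\<in>B. \<bar>\<psi> f - \<phi> f\<bar>) < \<epsilon>} | \<phi> B \<epsilon>.
        \<phi> \<in> tvs_dual T \<and> tvs_bounded T B \<and> B \<noteq> {} \<and> \<epsilon> > 0}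
     \<union> {tvs_dual T})"

definition barrel :: "('b \<Rightarrow> real) topology \<Rightarrow> ('b \<Rightarrow> real) set \<Rightarrow> bool" where
  "barrel S A \<longleftrightarrow> A \<subseteq> topspace S \<and> closedin S A
     \<and> (\<forall>f\<in>A. \<forall>g\<in>A. \<forall>t. 0 \<le> t \<and> t \<le> 1 \<longrightarrow> (\<lambda>x. t * f x + (1 - t) * g x) \<in> A)
     \<and> (\<forall>f\<in>A. \<forall>c. \<bar>c\<bar> \<le> 1 \<longrightarrow> fscale c f \<in> A)
     \<and> (\<forall>f\<in>topspace S. \<exists>r>0. \<forall>c. \<bar>c\<bar> \<ge> r \<longrightarrow> f \<in> fscale c ` A)"

definition barrelled :: "('b \<Rightarrow> real) topology \<Rightarrow> bool" where
  "barrelled S \<longleftrightarrow> (\<forall>A. barrel S A \<longrightarrow> (\<exists>U. openin S U \<and> zero_fun \<in> U \<and> U \<subseteq> A))"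

definition distinguished :: "('b \<Rightarrow> real) topology \<Rightarrow> bool" where
  "distinguished T \<longleftrightarrow> barrelled (strong_dual_topology T)"

definition Cp_set :: "'a topology \<Rightarrow> ('a \<Rightarrow> real) set" where
  "Cp_set X = {f. continuous_map X euclideanreal f \<and> (\<forall>x. x \<notin> topspace X \<longrightarrow> f x = 0)}"

definition Cp :: "'a topology \<Rightarrow> ('a \<Rightarrow> real) topology" where
  "Cp X = subtopology (product_topology (\<lambda>_. euclideanreal) UNIV) (Cp_set X)"

definition tychonoff_space :: "'a topology \<Rightarrow> bool" where
  "tychonoff_space X \<longleftrightarrow> Hausdorff_space X \<and> completely_regular_space X"

definition point_finite_open_expansion :: "'a topology \<Rightarrow> 'a set set \<Rightarrow> bool" where
  "point_finite_open_expansion X \<P> \<longleftrightarrow> (\<exists>U. (\<forall>P\<in>\<P>. openin X (U P) \<and> P \<subseteq> U P)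
       \<and> (\<forall>x\<in>topspace X. finite {P\<in>\<P>. x \<in> U P}))"

definition Delta_space :: "'a topology \<Rightarrow> bool" where
  "Delta_space X \<longleftrightarrow> (\<forall>D :: nat \<Rightarrow> 'a set. (\<forall>n. D n \<subseteq> topspace X) \<and> decseq D \<and> (\<Inter>n. D n) = {}
      \<longrightarrow> (\<exists>V :: nat \<Rightarrow> 'a set. (\<forall>n. openin X (V n)) \<and> decseq V \<and> (\<forall>n. D n \<subseteq> V n)
             \<and> (\<Inter>n. V n) = {}))"

end

theory Submission
  imports Defs
begin

text \<open>Conditions (2), (3) and (4) are equivalent by elementary manipulations: a disjoint family
  becomes a partition once the complement of its union is added, and point-finite open
  expansions of a disjoint sequence \<open>D\<^sub>n\<close> correspond to open expansions with empty
  intersection of the decreasing tails \<open>\<Union>\<^sub>k\<^sub>\<ge>\<^sub>n D\<^sub>k\<close>.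

  For (1) \<open>\<longleftrightarrow>\<close> (2) the key fact is that every continuous linear functional on
  \<open>C\<^sub>p(X)\<close> is a finite combination of point evaluations \<open>\<delta>\<^sub>x\<close>.
  Given a barrel \<open>A\<close> in the strong dual, \<open>\<delta>\<^sub>x / r(x) \<in> A\<close> for some \<open>r(x) > 0\<close>;
  a point-finite open expansion of the partition of \<open>X\<close> by \<open>\<lceil>r\<rceil>\<close> yields a bounded set
  \<open>B \<subseteq> C\<^sub>p(X)\<close> interpolating on finite sets all values bounded by \<open>r\<close>, and by absolute
  convexity the unit ball of the seminorm \<open>sup\<^sub>B\<close> lies in \<open>A\<close>. Conversely, for a partition
  \<open>(D\<^sub>n)\<close> the functionals which near every \<open>x \<in> D\<^sub>n\<close> are multiples of \<open>\<delta>\<^sub>x\<close> with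
  coefficient at most \<open>1/(n+1)\<close> form a barrel. If \<open>C\<^sub>p(X)\<close> is distinguished it contains a
  ball of some bounded \<open>B\<close>, which forces \<open>B\<close> to reach size \<open>(n+1)\<eta>/4\<close> at every point of
  \<open>D\<^sub>n\<close>; the sets where \<open>B\<close> exceeds these thresholds form a point-finite open expansion.\<close>

section \<open>Point-finite expansions of disjoint sequences\<close>

definition point_finite_open_expansion_seq :: "'a topology \<Rightarrow> (nat \<Rightarrow> 'a set) \<Rightarrow> bool" where
  "point_finite_open_expansion_seq X D \<longleftrightarrow> (\<exists>U. (\<forall>n. openin X (U n) \<and> D n \<subseteq> U n)
       \<and> (\<forall>x\<in>topspace X. finite {n. x \<in> U n}))"

lemma point_finite_open_expansion_seqI:
  assumes "\<And>n. openin X (U n)" "\<And>n. D n \<subseteq> U n" "\<And>x. x \<in> topspace X \<Longrightarrow> finite {n. x \<in> U n}"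
  shows "point_finite_open_expansion_seq X D"
  using assms unfolding point_finite_open_expansion_seq_def by blast

lemma point_finite_open_expansion_seq_range:
  assumes disj: "disjoint_family D" and exp: "point_finite_open_expansion X (range D)"
  shows "point_finite_open_expansion_seq X D"
proof -
  obtain U where U: "\<And>n. openin X (U (D n))" "\<And>n. D n \<subseteq> U (D n)"
    and fin: "\<And>x. x \<in> topspace X \<Longrightarrow> finite {P \<in> range D. x \<in> U P}"
    using exp unfolding point_finite_open_expansion_def by blast
  define V where "V n = (if D n = {} then {} else U (D n))" for n
  show ?thesis
  proof (rule point_finite_open_expansion_seqI[of X V])
    fix x assume x: "x \<in> topspace X"
    have "inj_on D {n. x \<in> V n}"
    proof (rule inj_onI)
      fix m n assume "m \<in> {n. x \<in> V n}" "D m = D n"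
      then have "D m \<inter> D n \<noteq> {}" by (simp add: V_def split: if_splits)
      then show "m = n" using disj unfolding disjoint_family_on_def by blast
    qed
    moreover have "D ` {n. x \<in> V n} \<subseteq> {P \<in> range D. x \<in> U P}"
      by (auto simp: V_def split: if_splits)
    then have "finite (D ` {n. x \<in> V n})" using fin[OF x] by (rule finite_subset)
    ultimately show "finite {n. x \<in> V n}" by (rule finite_imageD[rotated])
  qed (use U in \<open>auto simp: V_def\<close>)
qed

lemma point_finite_open_expansion_of_seq:
  assumes cover: "\<P> - {{}} \<subseteq> range D" and exp: "point_finite_open_expansion_seq X D"
  shows "point_finite_open_expansion X \<P>"
proof -
  obtain U where U: "\<And>n. openin X (U n)" "\<And>n. D n \<subseteq> U n"
    and fin: "\<And>x. x \<in> topspace X \<Longrightarrow> finite {n. x \<in> U n}"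
    using exp unfolding point_finite_open_expansion_seq_def by blast
  define idx where "idx P = (SOME n. D n = P)" for P
  have D_idx: "D (idx P) = P" if "P \<in> \<P>" "P \<noteq> {}" for P
    unfolding idx_def by (rule someI_ex) (use cover that in blast)
  define V where "V P = (if P = {} then {} else U (idx P))" for P
  show ?thesis
    unfolding point_finite_open_expansion_def
  proof (intro exI[of _ V] conjI ballI)
    fix P assume "P \<in> \<P>"
    then show "openin X (V P)" "P \<subseteq> V P"
      using U[of "idx P"] D_idx[of P] by (auto simp: V_def)
  next
    fix x assume "x \<in> topspace X"
    have "{P \<in> \<P>. x \<in> V P} \<subseteq> D ` {n. x \<in> U n}"
      using D_idx by (force simp: V_def split: if_splits)
    then show "finite {P \<in> \<P>. x \<in> V P}"
      using finite_imageI[OF fin[OF \<open>x \<in> topspace X\<close>]] by (rule finite_subset)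
  qed
qed

lemma countable_disjoint_enumeration:
  assumes "countable \<P>" "disjoint \<P>"
  obtains D :: "nat \<Rightarrow> 'a set" where "disjoint_family D" "range D - {{}} = \<P> - {{}}"
proof -
  define \<P>' where "\<P>' = \<P> - {{}}"
  have "countable \<P>'" using assms(1) unfolding \<P>'_def by simp
  then obtain g :: "'a set \<Rightarrow> nat" where g: "inj_on g \<P>'"
    unfolding countable_def by blast
  define D where "D n = (if n \<in> g ` \<P>' then the_inv_into \<P>' g n else {})" for n
  have D_g: "D (g P) = P" if "P \<in> \<P>'" for P
    using that g by (simp add: D_def the_inv_into_f_f)
  show ?thesis
  proof (rule that)
    show "disjoint_family D"
      unfolding disjoint_family_on_def
    proof (intro ballI impI)
      fix m n :: nat assume "m \<noteq> n"
      show "D m \<inter> D n = {}"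
      proof (cases "m \<in> g ` \<P>' \<and> n \<in> g ` \<P>'")
        case True
        then obtain P Q where PQ: "P \<in> \<P>'" "Q \<in> \<P>'" "m = g P" "n = g Q" by blast
        then have "P \<noteq> Q" using \<open>m \<noteq> n\<close> by blast
        then have "P \<inter> Q = {}" using PQ assms(2) unfolding \<P>'_def by (simp add: disjointD)
        then show ?thesis using PQ D_g by simp
      qed (auto simp: D_def)
    qed
    have "D n \<in> \<P>'" if "D n \<noteq> {}" for n
    proof -
      have "n \<in> g ` \<P>'" using that by (auto simp: D_def)
      then show ?thesis using the_inv_into_into[OF g] by (simp add: D_def)
    qed
    then have "range D - {{}} \<subseteq> \<P>'" by blast
    moreover have "P \<in> range D" if "P \<in> \<P>'" for P
      using rangeI[of D "g P"] D_g[OF that] by simp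
    ultimately show "range D - {{}} = \<P> - {{}}" unfolding \<P>'_def by auto
  qed
qed

lemma disjoint_expansions_iff_seq:
  fixes X :: "'a topology" and Q :: "'a set \<Rightarrow> bool"
  shows "(\<forall>\<P>. countable \<P> \<and> disjoint \<P> \<and> Q (\<Union>\<P>) \<longrightarrow> point_finite_open_expansion X \<P>)
     \<longleftrightarrow> (\<forall>D :: nat \<Rightarrow> 'a set. disjoint_family D \<and> Q (\<Union>(range D))
            \<longrightarrow> point_finite_open_expansion_seq X D)"
proof (intro iffI allI impI)
  fix D :: "nat \<Rightarrow> 'a set"
  assume sets: "\<forall>\<P>. countable \<P> \<and> disjoint \<P> \<and> Q (\<Union>\<P>) \<longrightarrow> point_finite_open_expansion X \<P>"
    and D: "disjoint_family D \<and> Q (\<Union>(range D))"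
  then have "disjoint (range D)" by (simp add: disjoint_family_on_disjoint_image)
  then have "point_finite_open_expansion X (range D)" using sets D by simp
  then show "point_finite_open_expansion_seq X D"
    using D point_finite_open_expansion_seq_range by blast
next
  fix \<P> :: "'a set set"
  assume seq: "\<forall>D :: nat \<Rightarrow> 'a set. disjoint_family D \<and> Q (\<Union>(range D))
      \<longrightarrow> point_finite_open_expansion_seq X D"
    and \<P>: "countable \<P> \<and> disjoint \<P> \<and> Q (\<Union>\<P>)"
  obtain D :: "nat \<Rightarrow> 'a set" where D: "disjoint_family D" "range D - {{}} = \<P> - {{}}"
    using countable_disjoint_enumeration \<P> by blast
  have "\<Union>(range D) = \<Union>(range D - {{}})" "\<Union>\<P> = \<Union>(\<P> - {{}})" by auto
  then have "point_finite_open_expansion_seq X D"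
    using seq \<P> D by simp
  then show "point_finite_open_expansion X \<P>"
    by (rule point_finite_open_expansion_of_seq[rotated]) (use D(2) in blast)
qed

lemma partition_expansions_imp_disjoint_expansions:
  assumes "\<forall>\<P>. countable \<P> \<and> disjoint \<P> \<and> \<Union>\<P> = topspace X \<longrightarrow> point_finite_open_expansion X \<P>"
    and "countable \<P>" "disjoint \<P>" "\<Union>\<P> \<subseteq> topspace X"
  shows "point_finite_open_expansion X \<P>"
proof -
  define \<P>' where "\<P>' = insert (topspace X - \<Union>\<P>) \<P>"
  have "countable \<P>'" using assms(2) unfolding \<P>'_def by simp
  moreover have "disjoint \<P>'"
    using assms(3) unfolding \<P>'_def by (auto simp: pairwise_insert disjnt_def)
  moreover have "\<Union>\<P>' = topspace X" using assms(4) unfolding \<P>'_def by auto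
  ultimately have "point_finite_open_expansion X \<P>'" using assms(1) by blast
  then obtain U where U: "\<forall>P\<in>\<P>'. openin X (U P) \<and> P \<subseteq> U P"
    "\<forall>x\<in>topspace X. finite {P\<in>\<P>'. x \<in> U P}"
    unfolding point_finite_open_expansion_def by blast
  show ?thesis
    unfolding point_finite_open_expansion_def
  proof (intro exI[of _ U] conjI ballI)
    fix x assume "x \<in> topspace X"
    moreover have "{P\<in>\<P>. x \<in> U P} \<subseteq> {P\<in>\<P>'. x \<in> U P}" unfolding \<P>'_def by blast
    ultimately show "finite {P\<in>\<P>. x \<in> U P}" using U(2) finite_subset by blast
  qed (use U(1) in \<open>simp_all add: \<P>'_def\<close>)
qed

lemma partition_expansions_iff_disjoint_expansions:
  "(\<forall>\<P>. countable \<P> \<and> disjoint \<P> \<and> \<Union>\<P> = topspace X \<longrightarrow> point_finite_open_expansion X \<P>)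
    \<longleftrightarrow> (\<forall>\<P>. countable \<P> \<and> disjoint \<P> \<and> \<Union>\<P> \<subseteq> topspace X \<longrightarrow> point_finite_open_expansion X \<P>)"
proof (intro iffI allI impI)
  fix \<P> :: "'a set set"
  assume "\<forall>\<P>. countable \<P> \<and> disjoint \<P> \<and> \<Union>\<P> = topspace X \<longrightarrow> point_finite_open_expansion X \<P>"
    and "countable \<P> \<and> disjoint \<P> \<and> \<Union>\<P> \<subseteq> topspace X"
  then show "point_finite_open_expansion X \<P>"
    by (intro partition_expansions_imp_disjoint_expansions) auto
qed simp

lemma Delta_space_imp_expansion_seq:
  assumes Delta: "Delta_space X" and disj: "disjoint_family D" and sub: "\<Union>(range D) \<subseteq> topspace X"
  shows "point_finite_open_expansion_seq X D"
proof -
  define E where "E n = (\<Union>k\<in>{n..}. D k)" for n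
  have E_empty: "(\<Inter>n. E n) = {}"
  proof (rule ccontr)
    assume "(\<Inter>n. E n) \<noteq> {}"
    then obtain x where x: "\<And>n. x \<in> E n" by blast
    obtain k where k: "x \<in> D k" using x[of 0] unfolding E_def by blast
    obtain j where "j > k" "x \<in> D j" using x[of "Suc k"] unfolding E_def by (auto simp: Suc_le_eq)
    moreover have "D k \<inter> D j = {}" if "j > k" for j
      using disj that unfolding disjoint_family_on_def by simp
    ultimately show False using k by blast
  qed
  have "decseq E" unfolding decseq_def E_def by (fastforce intro: order_trans)
  moreover have "\<forall>n. E n \<subseteq> topspace X" using sub unfolding E_def by auto
  ultimately have "\<exists>V. (\<forall>n. openin X (V n)) \<and> decseq V \<and> (\<forall>n. E n \<subseteq> V n) \<and> (\<Inter>n. V n) = {}"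
    using Delta E_empty unfolding Delta_space_def by blast
  then obtain V where V: "\<And>n. openin X (V n)" "decseq V" "\<And>n. E n \<subseteq> V n" "(\<Inter>n. V n) = {}"
    by blast
  show ?thesis
  proof (rule point_finite_open_expansion_seqI[of X V])
    show "D n \<subseteq> V n" for n using V(3)[of n] unfolding E_def by auto
    fix x
    obtain m where "x \<notin> V m" using V(4) by auto
    then have "{n. x \<in> V n} \<subseteq> {..<m}"
      using V(2) by (auto simp: decseq_def not_less[symmetric])
    then show "finite {n. x \<in> V n}" using finite_subset by blast
  qed (fact V)
qed

lemma Delta_space_if_expansion_seq:
  assumes exp: "\<And>D. disjoint_family D \<Longrightarrow> \<Union>(range D) \<subseteq> topspace X
      \<Longrightarrow> point_finite_open_expansion_seq X D"
  shows "Delta_space X"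
  unfolding Delta_space_def
proof (intro allI impI)
  fix D :: "nat \<Rightarrow> 'a set"
  assume D: "(\<forall>n. D n \<subseteq> topspace X) \<and> decseq D \<and> (\<Inter>n. D n) = {}"
  define Q where "Q n = D n - D (Suc n)" for n
  have "disjoint_family Q"
    unfolding disjoint_family_on_def
  proof (intro ballI impI)
    have *: "Q m \<inter> Q n = {}" if "m < n" for m n
    proof -
      have "D n \<subseteq> D (Suc m)" using D that by (simp add: decseq_def)
      then show ?thesis unfolding Q_def by blast
    qed
    fix m n :: nat assume "m \<noteq> n"
    then show "Q m \<inter> Q n = {}" using *[of m n] *[of n m] by (cases "m < n") auto
  qed
  moreover have "\<Union>(range Q) \<subseteq> topspace X" using D unfolding Q_def by auto
  ultimately have "point_finite_open_expansion_seq X Q" by (rule exp)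
  then obtain U where U: "\<And>n. openin X (U n)" "\<And>n. Q n \<subseteq> U n"
    and fin: "\<And>x. x \<in> topspace X \<Longrightarrow> finite {n. x \<in> U n}"
    unfolding point_finite_open_expansion_seq_def by blast
  define V where "V n = (\<Union>k\<in>{n..}. U k)" for n
  show "\<exists>V. (\<forall>n. openin X (V n)) \<and> decseq V \<and> (\<forall>n. D n \<subseteq> V n) \<and> (\<Inter>n. V n) = {}"
  proof (intro exI[of _ V] conjI allI)
    show "openin X (V n)" for n unfolding V_def using U(1) by blast
    show "decseq V" unfolding decseq_def V_def by (fastforce intro: order_trans)
  next
    fix n show "D n \<subseteq> V n"
    proof
      fix x assume x: "x \<in> D n"
      define m where "m = (LEAST m. x \<notin> D m)"
      have "\<exists>m. x \<notin> D m" using D by auto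
      then have xm: "x \<notin> D m" unfolding m_def by (rule LeastI_ex)
      have "n < m"
      proof (rule ccontr)
        assume "\<not> n < m"
        then have "D n \<subseteq> D m" using D by (simp add: decseq_def)
        then show False using x xm by blast
      qed
      then obtain k where k: "m = Suc k" "n \<le> k" by (cases m) auto
      then have "x \<in> D k" using not_less_Least[of k "\<lambda>m. x \<notin> D m"] unfolding m_def by simp
      then have "x \<in> Q k" using xm k unfolding Q_def by simp
      then show "x \<in> V n" unfolding V_def using U(2) k by blast
    qed
  next
    show "(\<Inter>n. V n) = {}"
    proof (rule ccontr)
      assume "(\<Inter>n. V n) \<noteq> {}"
      then obtain x where x: "\<And>n. x \<in> V n" by blast
      obtain k where "x \<in> U k" using x[of 0] unfolding V_def by blast
      then have "x \<in> topspace X" using openin_subset[OF U(1)] by blast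
      moreover have "infinite {k. x \<in> U k}"
        unfolding infinite_nat_iff_unbounded_le using x unfolding V_def by blast
      ultimately show False using fin by blast
    qed
  qed
qed

lemma expansion_seq_iff_Delta_space:
  "(\<forall>D :: nat \<Rightarrow> 'a set. disjoint_family D \<and> \<Union>(range D) \<subseteq> topspace X
      \<longrightarrow> point_finite_open_expansion_seq X D) \<longleftrightarrow> Delta_space X"
proof
  assume "\<forall>D :: nat \<Rightarrow> 'a set. disjoint_family D \<and> \<Union>(range D) \<subseteq> topspace X
    \<longrightarrow> point_finite_open_expansion_seq X D"
  then show "Delta_space X" by (intro Delta_space_if_expansion_seq) blast
next
  assume "Delta_space X"
  then show "\<forall>D :: nat \<Rightarrow> 'a set. disjoint_family D \<and> \<Union>(range D) \<subseteq> topspace X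
    \<longrightarrow> point_finite_open_expansion_seq X D"
    by (intro allI impI Delta_space_imp_expansion_seq) auto
qed

section \<open>The space \<open>C\<^sub>p(X)\<close> and its dual\<close>

lemma topspace_Cp [simp]: "topspace (Cp X) = Cp_set X"
  unfolding Cp_def by simp

lemma Cp_setD:
  "f \<in> Cp_set X \<Longrightarrow> continuous_map X euclideanreal f"
  "f \<in> Cp_set X \<Longrightarrow> x \<notin> topspace X \<Longrightarrow> f x = 0"
  unfolding Cp_set_def by auto

lemma Cp_set_zero: "zero_fun \<in> Cp_set X"
  unfolding Cp_set_def zero_fun_def by auto

lemma Cp_set_add: "f \<in> Cp_set X \<Longrightarrow> g \<in> Cp_set X \<Longrightarrow> (\<lambda>x. f x + g x) \<in> Cp_set X"
  unfolding Cp_set_def by (auto intro: continuous_map_add)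

lemma Cp_set_cmult: "f \<in> Cp_set X \<Longrightarrow> (\<lambda>x. c * f x) \<in> Cp_set X"
  unfolding Cp_set_def by (auto intro: continuous_map_real_mult_left)

lemma Cp_set_scale: "f \<in> Cp_set X \<Longrightarrow> fscale c f \<in> Cp_set X"
  unfolding fscale_def by (rule Cp_set_cmult)

lemma Cp_set_lincomb:
  "f \<in> Cp_set X \<Longrightarrow> g \<in> Cp_set X \<Longrightarrow> (\<lambda>x. a * f x + b * g x) \<in> Cp_set X"
  by (intro Cp_set_add Cp_set_cmult)

lemma Cp_set_sum:
  "finite I \<Longrightarrow> (\<And>i. i \<in> I \<Longrightarrow> h i \<in> Cp_set X) \<Longrightarrow> (\<lambda>x. \<Sum>i\<in>I. c i * h i x) \<in> Cp_set X"
proof (induction I rule: finite_induct)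
  case empty
  then show ?case using Cp_set_zero unfolding zero_fun_def by simp
next
  case (insert i I)
  then show ?case by (simp add: Cp_set_add Cp_set_cmult)
qed

lemma continuous_map_Cp_eval: "continuous_map (Cp X) euclideanreal (\<lambda>f. f x)"
  unfolding Cp_def
  by (rule continuous_map_from_subtopology) (rule continuous_map_product_projection, simp)

lemma Cp_set_bump:
  assumes "completely_regular_space X" "closedin X C" "x \<in> topspace X" "x \<notin> C"
  obtains f where "f \<in> Cp_set X" "f x = 1" "\<And>z. 0 \<le> f z \<and> f z \<le> 1" "\<And>z. z \<in> C \<Longrightarrow> f z = 0"
proof -
  obtain g :: "'a \<Rightarrow> real" where g: "continuous_map X (top_of_set {0..1}) g" "g x = 0" "g ` C \<subseteq> {1}"
    using assms unfolding completely_regular_space_def by blast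
  then have g_cont: "continuous_map X euclideanreal g"
    and g_range: "\<And>z. z \<in> topspace X \<Longrightarrow> g z \<in> {0..1}"
    by (auto simp: continuous_map_in_subtopology)
  define f where "f z = (if z \<in> topspace X then 1 - g z else 0)" for z
  have "continuous_map X euclideanreal (\<lambda>z. 1 - g z)"
    using g_cont by (intro continuous_intros) auto
  then have "continuous_map X euclideanreal f" by (rule continuous_map_eq) (simp add: f_def)
  then have "f \<in> Cp_set X" unfolding Cp_set_def by (simp add: f_def)
  moreover have "0 \<le> f z \<and> f z \<le> 1" for z
    using g_range[of z] by (cases "z \<in> topspace X") (auto simp: f_def)
  moreover have "f z = 0" if "z \<in> C" for z
    using g(3) that closedin_subset[OF assms(2)] by (auto simp: f_def)
  ultimately show ?thesis using that g(2) assms(3) by (simp add: f_def)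
qed

lemma Cp_open_basis:
  assumes "openin (Cp X) U" "zero_fun \<in> U"
  obtains Y where "\<And>i. open (Y i)" "\<And>i. (0::real) \<in> Y i" "finite {i. Y i \<noteq> UNIV}"
    "\<And>g. g \<in> Cp_set X \<Longrightarrow> (\<And>i. g i \<in> Y i) \<Longrightarrow> g \<in> U"
proof -
  obtain W where W: "openin (product_topology (\<lambda>_. euclideanreal) UNIV) W" "U = W \<inter> Cp_set X"
    using assms(1) unfolding Cp_def openin_subtopology by blast
  have "zero_fun \<in> W" using assms(2) W by auto
  from product_topology_open_contains_basis[OF W(1) this] obtain Y where
    Y: "zero_fun \<in> (\<Pi>\<^sub>E i\<in>UNIV. Y i)" "\<And>i. openin euclideanreal (Y i)"
       "finite {i. Y i \<noteq> topspace euclideanreal}" "(\<Pi>\<^sub>E i\<in>UNIV. Y i) \<subseteq> W"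
    by blast
  show ?thesis
  proof (rule that[of Y])
    show "open (Y i)" for i using Y(2)[of i] by simp
    show "(0::real) \<in> Y i" for i using Y(1) unfolding zero_fun_def by auto
    show "finite {i. Y i \<noteq> UNIV}" using Y(3) by simp
    fix g assume "g \<in> Cp_set X" "\<And>i. g i \<in> Y i"
    then show "g \<in> U" using Y(4) W by auto
  qed
qed

lemma sum_eq_single_nonzero:
  assumes "finite F" "y \<in> F" "\<And>z. z \<in> F \<Longrightarrow> z \<noteq> y \<Longrightarrow> g z = 0"
  shows "sum g F = g y"
  using sum.mono_neutral_right[of F "{y}" g] assms by auto

lemma Cp_set_separating_family:
  assumes tych: "tychonoff_space X" and fin: "finite F" and FX: "F \<subseteq> topspace X"
  obtains e where "\<And>y. y \<in> F \<Longrightarrow> e y \<in> Cp_set X" "\<And>y. y \<in> F \<Longrightarrow> e y y = 1"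
    "\<And>y z. 0 \<le> e y z \<and> e y z \<le> 1" "\<And>y z. y \<in> F \<Longrightarrow> z \<in> F \<Longrightarrow> z \<noteq> y \<Longrightarrow> e y z = 0"
proof -
  have "\<exists>e. e \<in> Cp_set X \<and> e y = 1 \<and> (\<forall>z. 0 \<le> e z \<and> e z \<le> 1) \<and> (\<forall>z\<in>F - {y}. e z = 0)"
    if "y \<in> F" for y
  proof -
    have "completely_regular_space X" using tych unfolding tychonoff_space_def by simp
    moreover have "closedin X (F - {y})"
      using tych fin FX unfolding tychonoff_space_def by (auto intro: closedin_Hausdorff_finite)
    moreover have "y \<in> topspace X" using that FX by blast
    ultimately obtain e where "e \<in> Cp_set X" "e y = 1" "\<And>z. 0 \<le> e z \<and> e z \<le> 1"
      "\<And>z. z \<in> F - {y} \<Longrightarrow> e z = 0"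
      by (rule Cp_set_bump) auto
    then show ?thesis by blast
  qed
  then obtain e where e: "\<forall>y\<in>F. e y \<in> Cp_set X \<and> e y y = 1 \<and> (\<forall>z. 0 \<le> e y z \<and> e y z \<le> 1)
      \<and> (\<forall>z\<in>F - {y}. e y z = 0)"
    by metis
  define e' where "e' y = (if y \<in> F then e y else zero_fun)" for y
  show ?thesis
    by (rule that[of e']) (use e in \<open>auto simp: e'_def zero_fun_def\<close>)
qed

definition dirac :: "'a topology \<Rightarrow> 'a \<Rightarrow> ('a \<Rightarrow> real) \<Rightarrow> real" where
  "dirac X x = (\<lambda>f. if f \<in> Cp_set X then f x else 0)"

lemma Cp_dualD:
  assumes "\<phi> \<in> tvs_dual (Cp X)"
  shows Cp_dual_continuous: "continuous_map (Cp X) euclideanreal \<phi>"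
    and Cp_dual_add: "f \<in> Cp_set X \<Longrightarrow> g \<in> Cp_set X \<Longrightarrow> \<phi> (\<lambda>x. f x + g x) = \<phi> f + \<phi> g"
    and Cp_dual_scale: "f \<in> Cp_set X \<Longrightarrow> \<phi> (fscale c f) = c * \<phi> f"
    and Cp_dual_outside: "f \<notin> Cp_set X \<Longrightarrow> \<phi> f = 0"
  using assms unfolding tvs_dual_def by auto

lemma Cp_dual_cmult: "\<phi> \<in> tvs_dual (Cp X) \<Longrightarrow> f \<in> Cp_set X \<Longrightarrow> \<phi> (\<lambda>x. c * f x) = c * \<phi> f"
  using Cp_dual_scale unfolding fscale_def by blast

lemma Cp_dual_zero: "\<phi> \<in> tvs_dual (Cp X) \<Longrightarrow> \<phi> zero_fun = 0"
  using Cp_dual_cmult[of \<phi> X zero_fun 0] Cp_set_zero[of X] unfolding zero_fun_def by simp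

lemma Cp_dual_sum:
  assumes \<phi>: "\<phi> \<in> tvs_dual (Cp X)"
  shows "finite I \<Longrightarrow> (\<And>i. i \<in> I \<Longrightarrow> h i \<in> Cp_set X) \<Longrightarrow>
    \<phi> (\<lambda>x. \<Sum>i\<in>I. c i * h i x) = (\<Sum>i\<in>I. c i * \<phi> (h i))"
proof (induction I rule: finite_induct)
  case empty
  then show ?case using Cp_dual_zero[OF \<phi>] unfolding zero_fun_def by simp
next
  case (insert i I)
  then have "\<phi> (\<lambda>x. c i * h i x + (\<Sum>i\<in>I. c i * h i x))
      = c i * \<phi> (h i) + \<phi> (\<lambda>x. \<Sum>i\<in>I. c i * h i x)"
    by (simp add: Cp_dual_add[OF \<phi>] Cp_dual_cmult[OF \<phi>] Cp_set_cmult Cp_set_sum)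
  then show ?case using insert by simp
qed

lemma zero_fun_in_Cp_dual: "zero_fun \<in> tvs_dual (Cp X)"
  unfolding tvs_dual_def zero_fun_def by auto

lemma Cp_dual_lincomb:
  assumes "\<phi> \<in> tvs_dual (Cp X)" "\<psi> \<in> tvs_dual (Cp X)"
  shows "(\<lambda>f. a * \<phi> f + b * \<psi> f) \<in> tvs_dual (Cp X)"
  using assms unfolding tvs_dual_def topspace_Cp
  by (auto intro!: continuous_map_add continuous_map_real_mult_left simp: algebra_simps)

lemma Cp_dual_cmult_closed: "\<phi> \<in> tvs_dual (Cp X) \<Longrightarrow> (\<lambda>f. c * \<phi> f) \<in> tvs_dual (Cp X)"
  using Cp_dual_lincomb[of \<phi> X \<phi> c 0] by simp

lemma dirac_in_Cp_dual: "dirac X x \<in> tvs_dual (Cp X)"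
  unfolding tvs_dual_def topspace_Cp
proof (intro CollectI conjI ballI allI impI)
  show "continuous_map (Cp X) euclideanreal (dirac X x)"
    by (rule continuous_map_eq[OF continuous_map_Cp_eval]) (simp add: dirac_def)
qed (auto simp: dirac_def Cp_set_add Cp_set_cmult fscale_def)

text \<open>Every continuous linear functional on \<open>C\<^sub>p(X)\<close> is a finite combination of point
  evaluations: it vanishes on the functions vanishing on the finite set of coordinates
  of a basic neighbourhood of \<open>0\<close> on which it is bounded.\<close>
lemma Cp_dual_finite_combination:
  assumes tych: "tychonoff_space X" and \<phi>: "\<phi> \<in> tvs_dual (Cp X)"
  obtains F a where "finite F" "F \<subseteq> topspace X" "\<And>f. f \<in> Cp_set X \<Longrightarrow> \<phi> f = (\<Sum>y\<in>F. a y * f y)"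
proof -
  define S where "S = {f \<in> topspace (Cp X). \<phi> f \<in> {-1<..<1}}"
  have "openin (Cp X) S" unfolding S_def
    by (rule openin_continuous_map_preimage[OF Cp_dual_continuous[OF \<phi>]]) simp
  moreover have "zero_fun \<in> S" unfolding S_def using Cp_set_zero Cp_dual_zero[OF \<phi>] by auto
  ultimately obtain Y where Y: "\<And>i. open (Y i)" "\<And>i. (0::real) \<in> Y i" "finite {i. Y i \<noteq> UNIV}"
    "\<And>g. g \<in> Cp_set X \<Longrightarrow> (\<And>i. g i \<in> Y i) \<Longrightarrow> g \<in> S"
    by (rule Cp_open_basis) blast
  define F where "F = {i. Y i \<noteq> UNIV} \<inter> topspace X"
  have fin: "finite F" and FX: "F \<subseteq> topspace X" using Y(3) unfolding F_def by auto
  have kernel: "\<phi> f = 0" if f: "f \<in> Cp_set X" "\<And>i. i \<in> F \<Longrightarrow> f i = 0" for f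
  proof (rule ccontr)
    assume ne: "\<phi> f \<noteq> 0"
    have "fscale (2 / \<phi> f) f \<in> S"
    proof (rule Y(4))
      show "fscale (2 / \<phi> f) f \<in> Cp_set X" by (rule Cp_set_scale[OF f(1)])
      fix i
      have "f i = 0" if "Y i \<noteq> UNIV"
        using f that Cp_setD(2)[OF f(1)] unfolding F_def by (cases "i \<in> topspace X") auto
      then show "fscale (2 / \<phi> f) f i \<in> Y i" using Y(2) unfolding fscale_def by fastforce
    qed
    then show False using ne Cp_dual_scale[OF \<phi> f(1)] unfolding S_def by auto
  qed
  obtain e where e: "\<And>y. y \<in> F \<Longrightarrow> e y \<in> Cp_set X" "\<And>y. y \<in> F \<Longrightarrow> e y y = 1"
    "\<And>y z. y \<in> F \<Longrightarrow> z \<in> F \<Longrightarrow> z \<noteq> y \<Longrightarrow> e y z = 0"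
    using Cp_set_separating_family[OF tych fin FX] by metis
  show ?thesis
  proof (rule that[OF fin FX])
    fix f assume f: "f \<in> Cp_set X"
    define s where "s = (\<lambda>x. \<Sum>y\<in>F. f y * e y x)"
    have s: "s \<in> Cp_set X" unfolding s_def using Cp_set_sum[OF fin e(1)] .
    have "s i = f i" if "i \<in> F" for i
      unfolding s_def using sum_eq_single_nonzero[OF fin that, of "\<lambda>y. f y * e y i"] e(2,3) that
      by simp
    then have "\<phi> (\<lambda>x. f x + (- 1) * s x) = 0"
      using f s by (intro kernel Cp_set_add Cp_set_cmult) auto
    moreover have "\<phi> (\<lambda>x. f x + (- 1) * s x) = \<phi> f + (- 1) * \<phi> s"
      by (simp only: Cp_dual_add[OF \<phi> f Cp_set_cmult[OF s]] Cp_dual_cmult[OF \<phi> s])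
    ultimately have "\<phi> f = \<phi> s" by simp
    also have "\<phi> s = (\<Sum>y\<in>F. f y * \<phi> (e y))"
      unfolding s_def by (rule Cp_dual_sum[OF \<phi> fin e(1)])
    finally show "\<phi> f = (\<Sum>y\<in>F. \<phi> (e y) * f y)" by (simp add: mult.commute)
  qed
qed

section \<open>Bounded sets and the strong dual\<close>

lemma tvs_bounded_Cp_pointwise:
  assumes "tvs_bounded (Cp X) B"
  shows "\<exists>M. \<forall>f\<in>B. \<bar>f x\<bar> \<le> M"
proof -
  define U where "U = {f \<in> topspace (Cp X). f x \<in> {-1<..<1::real}}"
  have "openin (Cp X) U" unfolding U_def
    by (rule openin_continuous_map_preimage[OF continuous_map_Cp_eval]) simp
  moreover have "zero_fun \<in> U" unfolding U_def using Cp_set_zero by (auto simp: zero_fun_def)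
  ultimately obtain t where t: "t > 0" "B \<subseteq> fscale t ` U"
    using assms unfolding tvs_bounded_def by blast
  have "\<bar>f x\<bar> \<le> t" if "f \<in> B" for f
    using t that unfolding U_def fscale_def by (auto simp: abs_mult)
  then show ?thesis by blast
qed

lemma tvs_bounded_Cp_subset: "tvs_bounded (Cp X) B \<Longrightarrow> B \<subseteq> Cp_set X"
  unfolding tvs_bounded_def by simp

lemma tvs_bounded_CpI:
  assumes B: "B \<subseteq> Cp_set X" and pointwise: "\<And>x. \<exists>M. \<forall>f\<in>B. \<bar>f x\<bar> \<le> M"
  shows "tvs_bounded (Cp X) B"
  unfolding tvs_bounded_def
proof (intro conjI allI impI)
  show "B \<subseteq> topspace (Cp X)" using B by simp
  fix U assume U: "openin (Cp X) U \<and> zero_fun \<in> U"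
  then obtain Y where Y: "\<And>i. open (Y i)" "\<And>i. (0::real) \<in> Y i" "finite {i. Y i \<noteq> UNIV}"
    "\<And>g. g \<in> Cp_set X \<Longrightarrow> (\<And>i. g i \<in> Y i) \<Longrightarrow> g \<in> U"
    by (metis Cp_open_basis)
  define I where "I = {i. Y i \<noteq> UNIV}"
  have "open (\<Inter>i\<in>I. Y i)" "0 \<in> (\<Inter>i\<in>I. Y i)" using Y(1-3) unfolding I_def by auto
  then obtain e where e: "e > 0" "ball 0 e \<subseteq> (\<Inter>i\<in>I. Y i)"
    by (meson open_contains_ball)
  define M where "M i = (SOME M. \<forall>f\<in>B. \<bar>f i\<bar> \<le> M)" for i
  have M: "\<bar>f i\<bar> \<le> M i" if "f \<in> B" for f i
    using someI_ex[OF pointwise[of i]] that unfolding M_def by blast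
  define K where "K = 1 + (\<Sum>i\<in>I. \<bar>M i\<bar>)"
  have K: "\<bar>f i\<bar> \<le> K" if "f \<in> B" "i \<in> I" for f i
  proof -
    have "\<bar>M i\<bar> \<le> (\<Sum>i\<in>I. \<bar>M i\<bar>)"
      using Y(3) that unfolding I_def by (intro member_le_sum) auto
    then show ?thesis using M[OF that(1), of i] unfolding K_def by linarith
  qed
  have "K > 0" unfolding K_def by (simp add: add_pos_nonneg sum_nonneg)
  define t where "t = 2 * K / e"
  have t: "t > 0" unfolding t_def using \<open>K > 0\<close> e by simp
  show "\<exists>t>0. B \<subseteq> fscale t ` U"
  proof (intro exI[of _ t] conjI subsetI)
    fix f assume f: "f \<in> B"
    have "fscale (1/t) f \<in> U"
    proof (rule Y(4))
      show "fscale (1/t) f \<in> Cp_set X" using f B Cp_set_scale by blast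
      fix i show "fscale (1/t) f i \<in> Y i"
      proof (cases "i \<in> I")
        case True
        have "\<bar>f i\<bar> / t \<le> K / t" using K[OF f True] t by (simp add: divide_right_mono)
        also have "K / t = e / 2" unfolding t_def using \<open>K > 0\<close> e by simp
        finally have "\<bar>f i\<bar> / t < e" using e by linarith
        then have "fscale (1/t) f i \<in> ball 0 e"
          using t by (simp add: fscale_def abs_mult)
        then show ?thesis using e(2) True by blast
      qed (simp add: I_def)
    qed
    moreover have "f = fscale t (fscale (1/t) f)" unfolding fscale_def using t by auto
    ultimately show "f \<in> fscale t ` U" by blast
  qed (rule t)
qed

lemma tvs_bounded_Cp_Un:
  assumes "tvs_bounded (Cp X) B" "tvs_bounded (Cp X) C"
  shows "tvs_bounded (Cp X) (B \<union> C)"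
proof (rule tvs_bounded_CpI)
  show "B \<union> C \<subseteq> Cp_set X" using assms unfolding tvs_bounded_def by auto
  fix x
  obtain M N where "\<forall>f\<in>B. \<bar>f x\<bar> \<le> M" "\<forall>f\<in>C. \<bar>f x\<bar> \<le> N"
    using tvs_bounded_Cp_pointwise[OF assms(1)] tvs_bounded_Cp_pointwise[OF assms(2)] by blast
  then show "\<exists>M. \<forall>f\<in>B \<union> C. \<bar>f x\<bar> \<le> M" by (intro exI[of _ "max M N"]) fastforce
qed

lemma tvs_bounded_Cp_zero: "tvs_bounded (Cp X) {zero_fun}"
  by (rule tvs_bounded_CpI) (auto simp: Cp_set_zero[unfolded zero_fun_def] zero_fun_def)

lemma bdd_above_Cp_dual_diff:
  assumes tych: "tychonoff_space X" and "\<psi> \<in> tvs_dual (Cp X)" "\<phi> \<in> tvs_dual (Cp X)"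
    and B: "tvs_bounded (Cp X) B"
  shows "bdd_above ((\<lambda>f. \<bar>\<psi> f - \<phi> f\<bar>) ` B)"
proof -
  have "(\<lambda>f. 1 * \<psi> f + (- 1) * \<phi> f) \<in> tvs_dual (Cp X)" using Cp_dual_lincomb assms by blast
  then obtain F a where "finite F"
    and eq: "\<And>f. f \<in> Cp_set X \<Longrightarrow> 1 * \<psi> f + (- 1) * \<phi> f = (\<Sum>y\<in>F. a y * f y)"
    by (rule Cp_dual_finite_combination[OF tych]) blast
  define M where "M y = (SOME M. \<forall>f\<in>B. \<bar>f y\<bar> \<le> M)" for y
  have M: "\<bar>f y\<bar> \<le> M y" if "f \<in> B" for f y
    using someI_ex[OF tvs_bounded_Cp_pointwise[OF B]] that unfolding M_def by blast
  have "\<bar>\<psi> f - \<phi> f\<bar> \<le> (\<Sum>y\<in>F. \<bar>a y\<bar> * M y)" if f: "f \<in> B" for f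
  proof -
    have "f \<in> Cp_set X" using B f unfolding tvs_bounded_def by auto
    then have "\<bar>\<psi> f - \<phi> f\<bar> = \<bar>\<Sum>y\<in>F. a y * f y\<bar>" using eq[of f] by simp
    also have "\<dots> \<le> (\<Sum>y\<in>F. \<bar>a y\<bar> * M y)"
      using M[OF f] by (intro order_trans[OF sum_abs] sum_mono) (simp add: abs_mult mult_left_mono)
    finally show ?thesis .
  qed
  then show ?thesis unfolding bdd_above_def by blast
qed

definition strong_ball ::
    "('b \<Rightarrow> real) topology \<Rightarrow> (('b \<Rightarrow> real) \<Rightarrow> real) \<Rightarrow> ('b \<Rightarrow> real) set \<Rightarrow> real
      \<Rightarrow> (('b \<Rightarrow> real) \<Rightarrow> real) set" where
  "strong_ball T \<phi> B \<epsilon> = {\<psi> \<in> tvs_dual T. (SUP f\<in>B. \<bar>\<psi> f - \<phi> f\<bar>) < \<epsilon>}"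

lemma strong_dual_topology_eq:
  "strong_dual_topology T = topology_generated_by
     ({strong_ball T \<phi> B \<epsilon> | \<phi> B \<epsilon>. \<phi> \<in> tvs_dual T \<and> tvs_bounded T B \<and> B \<noteq> {} \<and> \<epsilon> > 0}
      \<union> {tvs_dual T})"
  unfolding strong_dual_topology_def strong_ball_def ..

lemma topspace_strong_dual [simp]: "topspace (strong_dual_topology T) = tvs_dual T"
  unfolding strong_dual_topology_eq topology_generated_by_topspace by (auto simp: strong_ball_def)

lemma openin_strong_ball:
  "\<phi> \<in> tvs_dual T \<Longrightarrow> tvs_bounded T B \<Longrightarrow> B \<noteq> {} \<Longrightarrow> \<epsilon> > 0
    \<Longrightarrow> openin (strong_dual_topology T) (strong_ball T \<phi> B \<epsilon>)"
  unfolding strong_dual_topology_eq by (rule topology_generated_by_Basis) blast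

lemma Cp_strong_ball_iff:
  assumes "tychonoff_space X" "\<phi> \<in> tvs_dual (Cp X)" "tvs_bounded (Cp X) B" "B \<noteq> {}"
  shows "\<psi> \<in> strong_ball (Cp X) \<phi> B \<epsilon> \<longleftrightarrow>
    \<psi> \<in> tvs_dual (Cp X) \<and> (\<exists>c < \<epsilon>. \<forall>f\<in>B. \<bar>\<psi> f - \<phi> f\<bar> \<le> c)"
proof
  assume \<psi>: "\<psi> \<in> strong_ball (Cp X) \<phi> B \<epsilon>"
  then have "\<psi> \<in> tvs_dual (Cp X)" unfolding strong_ball_def by simp
  then have "\<forall>f\<in>B. \<bar>\<psi> f - \<phi> f\<bar> \<le> (SUP f\<in>B. \<bar>\<psi> f - \<phi> f\<bar>)"
    using assms by (auto intro: cSUP_upper bdd_above_Cp_dual_diff)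
  then show "\<psi> \<in> tvs_dual (Cp X) \<and> (\<exists>c < \<epsilon>. \<forall>f\<in>B. \<bar>\<psi> f - \<phi> f\<bar> \<le> c)"
    using \<psi> unfolding strong_ball_def by blast
next
  assume "\<psi> \<in> tvs_dual (Cp X) \<and> (\<exists>c < \<epsilon>. \<forall>f\<in>B. \<bar>\<psi> f - \<phi> f\<bar> \<le> c)"
  then obtain c where "\<psi> \<in> tvs_dual (Cp X)" "c < \<epsilon>" "\<forall>f\<in>B. \<bar>\<psi> f - \<phi> f\<bar> \<le> c" by blast
  moreover have "(SUP f\<in>B. \<bar>\<psi> f - \<phi> f\<bar>) \<le> c"
    using assms(4) calculation(3) by (auto intro: cSUP_least)
  ultimately show "\<psi> \<in> strong_ball (Cp X) \<phi> B \<epsilon>" unfolding strong_ball_def by simp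
qed

lemma Cp_strong_open_contains_ball:
  assumes tych: "tychonoff_space X"
    and G: "openin (strong_dual_topology (Cp X)) G" and \<mu>: "\<mu> \<in> G"
  obtains B \<eta> where "tvs_bounded (Cp X) B" "B \<noteq> {}" "\<eta> > 0" "strong_ball (Cp X) \<mu> B \<eta> \<subseteq> G"
proof -
  let ?ball = "strong_ball (Cp X)"
  let ?nbhd = "\<lambda>G \<mu>. \<exists>B \<eta>. tvs_bounded (Cp X) B \<and> B \<noteq> {} \<and> \<eta> > 0 \<and> ?ball \<mu> B \<eta> \<subseteq> G"
  have "generate_topology_on
      ({?ball \<phi> B \<epsilon> | \<phi> B \<epsilon>. \<phi> \<in> tvs_dual (Cp X) \<and> tvs_bounded (Cp X) B \<and> B \<noteq> {} \<and> \<epsilon> > 0}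
       \<union> {tvs_dual (Cp X)}) G"
    using G unfolding strong_dual_topology_eq by (rule openin_topology_generated_by)
  then have "\<forall>\<mu>\<in>G \<inter> tvs_dual (Cp X). ?nbhd G \<mu>"
  proof (induction rule: generate_topology_on.induct)
    case (Int G H)
    show ?case
    proof
      fix \<mu> assume \<mu>: "\<mu> \<in> G \<inter> H \<inter> tvs_dual (Cp X)"
      then have "\<mu> \<in> G \<inter> tvs_dual (Cp X)" "\<mu> \<in> H \<inter> tvs_dual (Cp X)" by auto
      then obtain B \<eta> C \<theta> where B: "tvs_bounded (Cp X) B" "B \<noteq> {}" "\<eta> > 0" "?ball \<mu> B \<eta> \<subseteq> G"
        and C: "tvs_bounded (Cp X) C" "C \<noteq> {}" "\<theta> > 0" "?ball \<mu> C \<theta> \<subseteq> H"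
        using Int.IH by blast
      have BC: "tvs_bounded (Cp X) (B \<union> C)" using B C by (intro tvs_bounded_Cp_Un)
      have \<mu>_dual: "\<mu> \<in> tvs_dual (Cp X)" using \<mu> by blast
      have "?ball \<mu> (B \<union> C) (min \<eta> \<theta>) \<subseteq> G \<inter> H"
      proof
        fix \<psi> assume "\<psi> \<in> ?ball \<mu> (B \<union> C) (min \<eta> \<theta>)"
        then obtain c where c: "\<psi> \<in> tvs_dual (Cp X)" "c < min \<eta> \<theta>" "\<forall>f\<in>B \<union> C. \<bar>\<psi> f - \<mu> f\<bar> \<le> c"
          using Cp_strong_ball_iff[OF tych \<mu>_dual BC] B(2) by blast
        then have "\<psi> \<in> ?ball \<mu> B \<eta>" "\<psi> \<in> ?ball \<mu> C \<theta>"
          using Cp_strong_ball_iff[OF tych \<mu>_dual B(1,2)] Cp_strong_ball_iff[OF tych \<mu>_dual C(1,2)]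
          by auto
        then show "\<psi> \<in> G \<inter> H" using B(4) C(4) by blast
      qed
      then show "?nbhd (G \<inter> H) \<mu>"
        using B C BC by (intro exI[of _ "B \<union> C"] exI[of _ "min \<eta> \<theta>"]) auto
    qed
  next
    case (UN K)
    show ?case
    proof
      fix \<mu> assume "\<mu> \<in> \<Union>K \<inter> tvs_dual (Cp X)"
      then obtain G where "G \<in> K" "\<mu> \<in> G \<inter> tvs_dual (Cp X)" by blast
      then obtain B \<eta> where "tvs_bounded (Cp X) B" "B \<noteq> {}" "\<eta> > 0" "?ball \<mu> B \<eta> \<subseteq> G"
        using UN.IH by blast
      moreover have "G \<subseteq> \<Union>K" using \<open>G \<in> K\<close> by blast
      ultimately show "?nbhd (\<Union>K) \<mu>" by blast
    qed
  next
    case (Basis S)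
    show ?case
    proof
      fix \<mu> assume \<mu>: "\<mu> \<in> S \<inter> tvs_dual (Cp X)"
      show "?nbhd S \<mu>"
      proof (cases "S = tvs_dual (Cp X)")
        case True
        then show ?thesis
          using tvs_bounded_Cp_zero
          by (intro exI[of _ "{zero_fun}"] exI[of _ 1]) (auto simp: strong_ball_def)
      next
        case False
        then obtain \<phi> B \<epsilon> where S: "S = ?ball \<phi> B \<epsilon>" "\<phi> \<in> tvs_dual (Cp X)"
          "tvs_bounded (Cp X) B" "B \<noteq> {}" "\<epsilon> > 0"
          using Basis by blast
        obtain c where c: "c < \<epsilon>" "\<forall>f\<in>B. \<bar>\<mu> f - \<phi> f\<bar> \<le> c"
          using \<mu> S(1) Cp_strong_ball_iff[OF tych S(2-4)] by blast
        have \<mu>_dual: "\<mu> \<in> tvs_dual (Cp X)" using \<mu> by blast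
        have "?ball \<mu> B (\<epsilon> - c) \<subseteq> S"
        proof
          fix \<psi> assume "\<psi> \<in> ?ball \<mu> B (\<epsilon> - c)"
          then obtain d where d: "\<psi> \<in> tvs_dual (Cp X)" "d < \<epsilon> - c" "\<forall>f\<in>B. \<bar>\<psi> f - \<mu> f\<bar> \<le> d"
            using Cp_strong_ball_iff[OF tych \<mu>_dual S(3,4)] by blast
          have "\<bar>\<psi> f - \<phi> f\<bar> \<le> d + c" if "f \<in> B" for f
            using d(3) c(2) that by fastforce
          moreover have "d + c < \<epsilon>" using d(2) by simp
          ultimately show "\<psi> \<in> S"
            unfolding S(1) using Cp_strong_ball_iff[OF tych S(2-4)] d(1) by blast
        qed
        then show ?thesis using S c by (intro exI[of _ B] exI[of _ "\<epsilon> - c"]) auto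
      qed
    qed
  qed simp
  moreover have "\<mu> \<in> tvs_dual (Cp X)" using openin_subset[OF G] \<mu> by auto
  ultimately show ?thesis using that \<mu> by blast
qed

section \<open>Absolutely convex sets and interpolation\<close>

definition absolutely_convex :: "('c \<Rightarrow> real) set \<Rightarrow> bool" where
  "absolutely_convex A \<longleftrightarrow>
     (\<forall>f\<in>A. \<forall>g\<in>A. \<forall>t. 0 \<le> t \<and> t \<le> 1 \<longrightarrow> (\<lambda>x. t * f x + (1 - t) * g x) \<in> A)
     \<and> (\<forall>f\<in>A. \<forall>c. \<bar>c\<bar> \<le> 1 \<longrightarrow> fscale c f \<in> A)"

lemma absolutely_convex_fscale: "absolutely_convex A \<Longrightarrow> f \<in> A \<Longrightarrow> \<bar>c\<bar> \<le> 1 \<Longrightarrow> fscale c f \<in> A"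
  unfolding absolutely_convex_def by blast

lemma absolutely_convex_convex:
  "absolutely_convex A \<Longrightarrow> f \<in> A \<Longrightarrow> g \<in> A \<Longrightarrow> 0 \<le> t \<Longrightarrow> t \<le> 1
    \<Longrightarrow> (\<lambda>x. t * f x + (1 - t) * g x) \<in> A"
  unfolding absolutely_convex_def by blast

lemma absolutely_convex_sum:
  assumes A: "absolutely_convex A" "A \<noteq> {}"
  shows "finite F \<Longrightarrow> (\<And>y. y \<in> F \<Longrightarrow> e y \<in> A) \<Longrightarrow> (\<Sum>y\<in>F. \<bar>l y\<bar>) \<le> 1
    \<Longrightarrow> (\<lambda>x. \<Sum>y\<in>F. l y * e y x) \<in> A"
proof (induction F arbitrary: l rule: finite_induct)
  case empty
  obtain f where "f \<in> A" using A(2) by blast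
  then show ?case using absolutely_convex_fscale[OF A(1), of f 0] by (simp add: fscale_def)
next
  case (insert y F)
  define s where "s = (\<Sum>i\<in>F. \<bar>l i\<bar>)"
  define u where "u = \<bar>l y\<bar>"
  have us: "u + s \<le> 1" using insert unfolding u_def s_def by simp
  have s0: "s \<ge> 0" unfolding s_def by (simp add: sum_nonneg)
  have ey: "e y \<in> A" using insert.prems by simp
  show ?case
  proof (cases "s = 0")
    case True
    then have "\<forall>i\<in>F. l i = 0"
      unfolding s_def using insert.hyps(1) sum_nonneg_eq_0_iff[of F "\<lambda>i. \<bar>l i\<bar>"] by simp
    then have "(\<lambda>x. \<Sum>i\<in>insert y F. l i * e i x) = fscale (l y) (e y)"
      using insert.hyps unfolding fscale_def by simp
    moreover have "\<bar>l y\<bar> \<le> 1" using us s0 unfolding u_def by simp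
    ultimately show ?thesis using absolutely_convex_fscale[OF A(1) ey] by simp
  next
    case False
    then have spos: "s > 0" using s0 by simp
    text \<open>Write the combination as \<open>(u + s)\<close> times a convex combination of
      \<open>sgn (l y) \<cdot> e y\<close> and the normalised combination over \<open>F\<close>.\<close>
    define G where "G = (\<lambda>x. \<Sum>i\<in>F. (l i / s) * e i x)"
    have "(\<Sum>i\<in>F. \<bar>l i / s\<bar>) = 1"
      using spos by (simp add: sum_divide_distrib[symmetric] s_def)
    then have GA: "G \<in> A" unfolding G_def using insert.prems by (intro insert.IH) auto
    define E where "E = fscale (sgn (l y)) (e y)"
    have EA: "E \<in> A" unfolding E_def using absolutely_convex_fscale[OF A(1) ey] by (simp add: abs_sgn_eq)
    define t where "t = u / (u + s)"
    have t01: "0 \<le> t" "t \<le> 1" unfolding t_def u_def using spos by auto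
    define C where "C = (\<lambda>x. t * E x + (1 - t) * G x)"
    have "C \<in> A" unfolding C_def using absolutely_convex_convex[OF A(1) EA GA t01] .
    then have "fscale (u + s) C \<in> A"
      using absolutely_convex_fscale[OF A(1)] us s0 unfolding u_def by simp
    moreover have "fscale (u + s) C = (\<lambda>x. \<Sum>i\<in>insert y F. l i * e i x)"
    proof
      fix x
      have "(u + s) * t = u" "(u + s) * (1 - t) = s"
        unfolding t_def using spos u_def by (simp_all add: field_simps)
      moreover have "fscale (u + s) C x = ((u + s) * t) * E x + ((u + s) * (1 - t)) * G x"
        unfolding fscale_def C_def by (simp add: algebra_simps)
      ultimately have "fscale (u + s) C x = u * E x + s * G x" by simp
      also have "u * E x = l y * e y x" unfolding E_def fscale_def u_def
        by (simp add: mult.assoc[symmetric] abs_mult_sgn)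
      also have "s * G x = (\<Sum>i\<in>F. l i * e i x)" unfolding G_def using spos
        by (simp add: sum_distrib_left)
      finally show "fscale (u + s) C x = (\<Sum>i\<in>insert y F. l i * e i x)" using insert.hyps by simp
    qed
    ultimately show ?thesis by simp
  qed
qed

lemma barrel_absolutely_convex: "barrel S A \<Longrightarrow> absolutely_convex A"
  unfolding barrel_def absolutely_convex_def by blast

lemma finite_disjoint_open_nbhds:
  assumes tych: "tychonoff_space X" and fin: "finite F" and FX: "F \<subseteq> topspace X"
  obtains W where "\<And>y. y \<in> F \<Longrightarrow> openin X (W y)" "\<And>y. y \<in> F \<Longrightarrow> y \<in> W y"
    "\<And>y y'. y \<in> F \<Longrightarrow> y' \<in> F \<Longrightarrow> y \<noteq> y' \<Longrightarrow> W y \<inter> W y' = {}"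
proof -
  obtain e where e: "\<And>y. y \<in> F \<Longrightarrow> e y \<in> Cp_set X" "\<And>y. y \<in> F \<Longrightarrow> e y y = 1"
    "\<And>y z. y \<in> F \<Longrightarrow> z \<in> F \<Longrightarrow> z \<noteq> y \<Longrightarrow> e y z = 0"
    using Cp_set_separating_family[OF tych fin FX] by metis
  define W where "W y = {z \<in> topspace X. e y z \<in> {1/2<..}}
      \<inter> (\<Inter>y'\<in>F - {y}. {z \<in> topspace X. e y' z \<in> {..<1/2}}) \<inter> topspace X" for y
  show ?thesis
  proof
    fix y assume y: "y \<in> F"
    have pre: "openin X {z \<in> topspace X. e y' z \<in> S}" if "y' \<in> F" "open S" for y' S
      using openin_continuous_map_preimage[OF Cp_setD(1)[OF e(1)[OF that(1)]]] that(2) by simp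
    have "openin X {z \<in> topspace X. e y' z \<in> {..<1/2}}" if "y' \<in> F" for y'
      by (rule pre[OF that]) simp
    then have "openin X ((\<Inter>y'\<in>F - {y}. {z \<in> topspace X. e y' z \<in> {..<1/2}}) \<inter> topspace X)"
      using fin by (intro openin_INT) auto
    moreover have "openin X {z \<in> topspace X. e y z \<in> {1/2<..}}"
      by (rule pre[OF y]) simp
    ultimately show "openin X (W y)" unfolding W_def by (simp add: openin_Int Int_assoc)
    show "y \<in> W y" unfolding W_def using y FX e(2,3) by auto
  next
    fix y y' assume "y \<in> F" "y' \<in> F" "y \<noteq> y'"
    then have "e y' z < 1/2" if "z \<in> W y" for z using that unfolding W_def by auto
    moreover have "e y' z > 1/2" if "z \<in> W y'" for z using that unfolding W_def by auto
    ultimately show "W y \<inter> W y' = {}" by (meson disjoint_iff less_asym)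
  qed
qed

lemma Cp_set_interpolation:
  assumes tych: "tychonoff_space X" and fin: "finite F" and FX: "F \<subseteq> topspace X"
    and N: "\<And>y. y \<in> F \<Longrightarrow> openin X (N y) \<and> y \<in> N y"
  obtains f where "f \<in> Cp_set X" "\<And>y. y \<in> F \<Longrightarrow> f y = c y"
    "\<And>z. f z = 0 \<or> (\<exists>y\<in>F. z \<in> N y \<and> \<bar>f z\<bar> \<le> \<bar>c y\<bar>)"
proof -
  obtain W where W: "\<And>y. y \<in> F \<Longrightarrow> openin X (W y)" "\<And>y. y \<in> F \<Longrightarrow> y \<in> W y"
    "\<And>y y'. y \<in> F \<Longrightarrow> y' \<in> F \<Longrightarrow> y \<noteq> y' \<Longrightarrow> W y \<inter> W y' = {}"
    using finite_disjoint_open_nbhds[OF tych fin FX] by blast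
  define V where "V y = W y \<inter> N y" for y
  have "\<exists>b. b \<in> Cp_set X \<and> b y = 1 \<and> (\<forall>z. 0 \<le> b z \<and> b z \<le> 1) \<and> (\<forall>z. z \<notin> V y \<longrightarrow> b z = 0)"
    if y: "y \<in> F" for y
  proof -
    have "completely_regular_space X" using tych unfolding tychonoff_space_def by simp
    moreover have "closedin X (topspace X - V y)"
      unfolding V_def using W(1)[OF y] N[OF y] by (intro closedin_diff) auto
    moreover have "y \<in> topspace X" "y \<notin> topspace X - V y"
      using y FX W(2)[OF y] N[OF y] unfolding V_def by auto
    ultimately obtain b where b: "b \<in> Cp_set X" "b y = 1" "\<And>z. 0 \<le> b z \<and> b z \<le> 1"
      "\<And>z. z \<in> topspace X - V y \<Longrightarrow> b z = 0"
      by (rule Cp_set_bump) blast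
    moreover have "b z = 0" if "z \<notin> V y" for z
      using b(4)[of z] Cp_setD(2)[OF b(1), of z] that by (cases "z \<in> topspace X") auto
    ultimately show ?thesis by blast
  qed
  then have "\<forall>y\<in>F. \<exists>b. b \<in> Cp_set X \<and> b y = 1 \<and> (\<forall>z. 0 \<le> b z \<and> b z \<le> 1)
      \<and> (\<forall>z. z \<notin> V y \<longrightarrow> b z = 0)" by blast
  then obtain b where "\<forall>y\<in>F. b y \<in> Cp_set X \<and> b y y = 1 \<and> (\<forall>z. 0 \<le> b y z \<and> b y z \<le> 1)
      \<and> (\<forall>z. z \<notin> V y \<longrightarrow> b y z = 0)"
    by (metis bchoice)
  then have b: "\<And>y. y \<in> F \<Longrightarrow> b y \<in> Cp_set X" "\<And>y. y \<in> F \<Longrightarrow> b y y = 1"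
    "\<And>y z. y \<in> F \<Longrightarrow> 0 \<le> b y z \<and> b y z \<le> 1" "\<And>y z. y \<in> F \<Longrightarrow> z \<notin> V y \<Longrightarrow> b y z = 0"
    by auto
  define f where "f z = (\<Sum>y\<in>F. c y * b y z)" for z
  have single: "f z = c y * b y z" if "y \<in> F" "z \<in> V y" for y z
  proof -
    have "b y' z = 0" if "y' \<in> F" "y' \<noteq> y" for y'
      using b(4)[OF that(1)] W(3)[OF \<open>y \<in> F\<close> that(1)] that(2) \<open>z \<in> V y\<close> unfolding V_def by blast
    then show ?thesis
      unfolding f_def using sum_eq_single_nonzero[OF fin \<open>y \<in> F\<close>, of "\<lambda>y. c y * b y z"] by simp
  qed
  show ?thesis
  proof
    show "f \<in> Cp_set X" unfolding f_def[abs_def] by (rule Cp_set_sum[OF fin b(1)])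
    show "f y = c y" if "y \<in> F" for y
      using single[OF that] b(2)[OF that] W(2)[OF that] N[OF that] unfolding V_def by simp
    fix z
    show "f z = 0 \<or> (\<exists>y\<in>F. z \<in> N y \<and> \<bar>f z\<bar> \<le> \<bar>c y\<bar>)"
    proof (cases "\<exists>y\<in>F. z \<in> V y")
      case True
      then obtain y where y: "y \<in> F" "z \<in> V y" by blast
      have "\<bar>f z\<bar> = \<bar>c y\<bar> * b y z" using single[OF y] b(3)[OF y(1)] by (simp add: abs_mult)
      also have "\<dots> \<le> \<bar>c y\<bar>" using b(3)[OF y(1), of z] by (simp add: mult_left_le)
      finally show ?thesis using y unfolding V_def by blast
    next
      case False
      then show ?thesis unfolding f_def using b(4) by (simp add: sum.neutral)
    qed
  qed
qed

section \<open>Point-finite expansions make \<open>C\<^sub>p(X)\<close> distinguished\<close>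

lemma Cp_bounded_interpolating_set:
  fixes r :: "'a \<Rightarrow> real"
  assumes tych: "tychonoff_space X"
    and partitions: "\<And>D. disjoint_family D \<Longrightarrow> \<Union>(range D) = topspace X
      \<Longrightarrow> point_finite_open_expansion_seq X D"
  shows "\<exists>B. tvs_bounded (Cp X) B \<and> (\<forall>F c. finite F \<and> F \<subseteq> topspace X
      \<and> (\<forall>y\<in>F. \<bar>c y\<bar> \<le> r y) \<longrightarrow> (\<exists>f\<in>B. \<forall>y\<in>F. f y = c y))"
proof -
  define idx where "idx x = nat \<lceil>r x\<rceil>" for x
  define D where "D n = {x \<in> topspace X. idx x = n}" for n
  have "disjoint_family D" unfolding disjoint_family_on_def D_def by auto
  moreover have "\<Union>(range D) = topspace X" unfolding D_def by auto
  ultimately have "point_finite_open_expansion_seq X D" by (rule partitions)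
  then obtain U where U: "\<And>n. openin X (U n)" "\<And>n. D n \<subseteq> U n"
    and fin: "\<And>z. z \<in> topspace X \<Longrightarrow> finite {n. z \<in> U n}"
    unfolding point_finite_open_expansion_seq_def by blast
  text \<open>A function in \<open>B\<close> may reach \<open>n\<close> at \<open>z\<close> whenever the expansion of the
    \<open>n\<close>-th piece contains \<open>z\<close>; point-finiteness keeps this bound finite.\<close>
  define h where "h z = (\<Sum>n\<in>{n. z \<in> U n}. real n)" for z
  define B where "B = {f \<in> Cp_set X. \<forall>z\<in>topspace X. \<bar>f z\<bar> \<le> h z}"
  have h_ge: "real (idx y) \<le> h z" if "z \<in> topspace X" "z \<in> U (idx y)" for y z
    unfolding h_def using fin[OF that(1)] that(2) by (intro member_le_sum) auto
  show ?thesis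
  proof (intro exI[of _ B] conjI allI impI)
    show "tvs_bounded (Cp X) B"
    proof (rule tvs_bounded_CpI)
      show "B \<subseteq> Cp_set X" unfolding B_def by blast
      fix x show "\<exists>M. \<forall>f\<in>B. \<bar>f x\<bar> \<le> M"
      proof (cases "x \<in> topspace X")
        case True then show ?thesis unfolding B_def by blast
      next
        case False then show ?thesis unfolding B_def using Cp_setD(2) by (intro exI[of _ 0]) auto
      qed
    qed
  next
    fix F c assume "finite F \<and> F \<subseteq> topspace X \<and> (\<forall>y\<in>F. \<bar>c y\<bar> \<le> r y)"
    then have F: "finite F" "F \<subseteq> topspace X" and c: "\<And>y. y \<in> F \<Longrightarrow> \<bar>c y\<bar> \<le> r y" by auto
    have "openin X (U (idx y)) \<and> y \<in> U (idx y)" if "y \<in> F" for y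
      using U that F(2) unfolding D_def by blast
    then obtain f where f: "f \<in> Cp_set X" "\<And>y. y \<in> F \<Longrightarrow> f y = c y"
      "\<And>z. f z = 0 \<or> (\<exists>y\<in>F. z \<in> U (idx y) \<and> \<bar>f z\<bar> \<le> \<bar>c y\<bar>)"
      using Cp_set_interpolation[OF tych F, of "\<lambda>y. U (idx y)" c] by blast
    have bound: "\<bar>f z\<bar> \<le> h z" if z: "z \<in> topspace X" for z
    proof (cases "f z = 0")
      case True
      have "0 \<le> h z" unfolding h_def by (rule sum_nonneg) simp
      then show ?thesis using True by simp
    next
      case False
      then obtain y where y: "y \<in> F" "z \<in> U (idx y)" "\<bar>f z\<bar> \<le> \<bar>c y\<bar>" using f(3) by blast
      have "\<bar>c y\<bar> \<le> real (idx y)" using c[OF y(1)] real_nat_ceiling_ge[of "r y"] unfolding idx_def by linarith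
      then show ?thesis using y(3) h_ge[OF z y(2)] by linarith
    qed
    have "f \<in> B" unfolding B_def using f(1) bound by simp
    then show "\<exists>f\<in>B. \<forall>y\<in>F. f y = c y" using f(2) by blast
  qed
qed

lemma Cp_dual_mem_absolutely_convex:
  assumes A: "absolutely_convex A" "A \<noteq> {}" and fin: "finite F"
    and r: "\<And>y. y \<in> F \<Longrightarrow> r y > 0" and e: "\<And>y. y \<in> F \<Longrightarrow> fscale (1 / r y) (dirac X y) \<in> A"
    and \<psi>: "\<psi> \<in> tvs_dual (Cp X)" and rep: "\<And>h. h \<in> Cp_set X \<Longrightarrow> \<psi> h = (\<Sum>y\<in>F. a y * h y)"
    and small: "(\<Sum>y\<in>F. \<bar>a y\<bar> * r y) \<le> 1"
  shows "\<psi> \<in> A"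
proof -
  have "\<psi> = (\<lambda>h. \<Sum>y\<in>F. (a y * r y) * fscale (1 / r y) (dirac X y) h)"
  proof
    fix h show "\<psi> h = (\<Sum>y\<in>F. (a y * r y) * fscale (1 / r y) (dirac X y) h)"
    proof (cases "h \<in> Cp_set X")
      case True
      have "(a y * r y) * fscale (1 / r y) (dirac X y) h = a y * h y" if "y \<in> F" for y
        using r[OF that] True by (simp add: fscale_def dirac_def)
      then have "(\<Sum>y\<in>F. (a y * r y) * fscale (1 / r y) (dirac X y) h) = (\<Sum>y\<in>F. a y * h y)"
        by (rule sum.cong[OF refl])
      then show ?thesis using rep[OF True] by simp
    next
      case False
      then show ?thesis using Cp_dual_outside[OF \<psi>] by (simp add: fscale_def dirac_def)
    qed
  qed
  moreover have "(\<Sum>y\<in>F. \<bar>a y * r y\<bar>) = (\<Sum>y\<in>F. \<bar>a y\<bar> * r y)"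
    using r by (intro sum.cong) (auto simp: abs_mult less_imp_le)
  ultimately show ?thesis
    using absolutely_convex_sum[OF A fin, of "\<lambda>y. fscale (1 / r y) (dirac X y)"] e small by simp
qed

lemma barrel_nonempty:
  assumes "barrel S A" "f \<in> topspace S"
  shows "A \<noteq> {}"
proof -
  obtain r where "r > 0" "\<forall>c. r \<le> \<bar>c\<bar> \<longrightarrow> f \<in> fscale c ` A"
    using assms unfolding barrel_def by blast
  then have "f \<in> fscale r ` A" by simp
  then show ?thesis by blast
qed

lemma distinguished_Cp_if_partition_expansions:
  assumes tych: "tychonoff_space X"
    and partitions: "\<And>D. disjoint_family D \<Longrightarrow> \<Union>(range D) = topspace X
      \<Longrightarrow> point_finite_open_expansion_seq X D"
  shows "distinguished (Cp X)"
  unfolding distinguished_def barrelled_def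
proof (intro allI impI)
  fix A assume bar: "barrel (strong_dual_topology (Cp X)) A"
  have AC: "absolutely_convex A" by (rule barrel_absolutely_convex[OF bar])
  have "A \<noteq> {}" using barrel_nonempty[OF bar] zero_fun_in_Cp_dual by (metis topspace_strong_dual)
  have absorb: "\<exists>r>0. \<forall>c. r \<le> \<bar>c\<bar> \<longrightarrow> \<phi> \<in> fscale c ` A" if "\<phi> \<in> tvs_dual (Cp X)" for \<phi>
    using bar that unfolding barrel_def by simp
  define r where "r x = (SOME r. r > 0 \<and> (\<forall>c. r \<le> \<bar>c\<bar> \<longrightarrow> dirac X x \<in> fscale c ` A))" for x
  have r: "r x > 0 \<and> (\<forall>c. r x \<le> \<bar>c\<bar> \<longrightarrow> dirac X x \<in> fscale c ` A)" for x
    unfolding r_def by (rule someI_ex[OF absorb[OF dirac_in_Cp_dual]])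
  then have r_pos: "r x > 0" for x by blast
  have e: "fscale (1 / r x) (dirac X x) \<in> A" for x
  proof -
    have "dirac X x \<in> fscale (r x) ` A" using r[of x] by simp
    then obtain g where "g \<in> A" "dirac X x = fscale (r x) g" by blast
    moreover have "fscale (1 / r x) (fscale (r x) g) = g" using r_pos[of x] by (auto simp: fscale_def)
    ultimately show ?thesis by simp
  qed
  obtain B where B: "tvs_bounded (Cp X) B"
    and interpolate: "\<forall>F c. finite F \<and> F \<subseteq> topspace X \<and> (\<forall>y\<in>F. \<bar>c y\<bar> \<le> r y)
      \<longrightarrow> (\<exists>f\<in>B. \<forall>y\<in>F. f y = c y)"
    using Cp_bounded_interpolating_set[OF tych partitions, where r = r] by blast
  have "B \<noteq> {}" using interpolate[rule_format, of "{}" "\<lambda>_. 0"] by auto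
  note ball_iff = Cp_strong_ball_iff[OF tych zero_fun_in_Cp_dual B \<open>B \<noteq> {}\<close>]
  show "\<exists>U. openin (strong_dual_topology (Cp X)) U \<and> zero_fun \<in> U \<and> U \<subseteq> A"
  proof (intro exI[of _ "strong_ball (Cp X) zero_fun B 1"] conjI)
    show "openin (strong_dual_topology (Cp X)) (strong_ball (Cp X) zero_fun B 1)"
      by (rule openin_strong_ball[OF zero_fun_in_Cp_dual B \<open>B \<noteq> {}\<close>]) simp
    show "zero_fun \<in> strong_ball (Cp X) zero_fun B 1"
      unfolding ball_iff using zero_fun_in_Cp_dual by (intro conjI exI[of _ 0]) simp_all
    show "strong_ball (Cp X) zero_fun B 1 \<subseteq> A"
    proof
      fix \<psi> assume "\<psi> \<in> strong_ball (Cp X) zero_fun B 1"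
      then have "\<psi> \<in> tvs_dual (Cp X) \<and> (\<exists>c<1. \<forall>f\<in>B. \<bar>\<psi> f - zero_fun f\<bar> \<le> c)"
        by (simp only: ball_iff)
      then obtain c where \<psi>: "\<psi> \<in> tvs_dual (Cp X)" and c: "c < 1" "\<And>f. f \<in> B \<Longrightarrow> \<bar>\<psi> f\<bar> \<le> c"
        by (auto simp: zero_fun_def)
      obtain F a where F: "finite F" "F \<subseteq> topspace X"
        and rep: "\<And>f. f \<in> Cp_set X \<Longrightarrow> \<psi> f = (\<Sum>y\<in>F. a y * f y)"
        using Cp_dual_finite_combination[OF tych \<psi>] by blast
      text \<open>Test \<open>\<psi>\<close> against a function of \<open>B\<close> with values \<open>\<plusminus>r y\<close> on \<open>F\<close>.\<close>
      have "\<bar>sgn (a y) * r y\<bar> \<le> r y" for y using r_pos[of y] by (simp add: abs_mult abs_sgn_eq)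
      then obtain f where f: "f \<in> B" "\<And>y. y \<in> F \<Longrightarrow> f y = sgn (a y) * r y"
        using interpolate[rule_format, of F "\<lambda>y. sgn (a y) * r y"] F by blast
      have "a y * f y = \<bar>a y\<bar> * r y" if "y \<in> F" for y
        using f(2)[OF that] by (auto simp: sgn_if)
      then have "(\<Sum>y\<in>F. a y * f y) = (\<Sum>y\<in>F. \<bar>a y\<bar> * r y)" by (rule sum.cong[OF refl])
      moreover have "f \<in> Cp_set X" using tvs_bounded_Cp_subset[OF B] f(1) by blast
      ultimately have "\<psi> f = (\<Sum>y\<in>F. \<bar>a y\<bar> * r y)" using rep by simp
      then have "(\<Sum>y\<in>F. \<bar>a y\<bar> * r y) \<le> 1" using c(1) c(2)[OF f(1)] by linarith
      then show "\<psi> \<in> A"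
        using Cp_dual_mem_absolutely_convex[OF AC \<open>A \<noteq> {}\<close> F(1) r_pos e \<psi> rep] by blast
    qed
  qed
qed

section \<open>Distinguished \<open>C\<^sub>p(X)\<close> yields point-finite expansions\<close>

lemma Cp_dual_local_coefficient:
  assumes fin: "finite F" and rep: "\<And>f. f \<in> Cp_set X \<Longrightarrow> \<mu> f = (\<Sum>y\<in>F. a y * f y)"
    and f: "f \<in> Cp_set X" "\<And>z. z \<in> F \<Longrightarrow> z \<noteq> x \<Longrightarrow> f z = 0"
  shows "\<mu> f = (if x \<in> F then a x else 0) * f x"
proof (cases "x \<in> F")
  case True
  then show ?thesis
    using rep[OF f(1)] sum_eq_single_nonzero[OF fin True, of "\<lambda>y. a y * f y"] f(2) by simp
next
  case False
  then have "a y * f y = 0" if "y \<in> F" for y using f(2) that by auto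
  then show ?thesis using rep[OF f(1)] False by (simp add: sum.neutral)
qed

lemma Cp_set_bump_avoiding_finite:
  assumes tych: "tychonoff_space X" and fin: "finite F" "F \<subseteq> topspace X"
    and C: "closedin X C" and x: "x \<in> topspace X" "x \<notin> C"
  obtains f where "f \<in> Cp_set X" "f x = 1" "\<And>z. 0 \<le> f z \<and> f z \<le> 1"
    "\<And>z. z \<in> C \<Longrightarrow> f z = 0" "\<And>z. z \<in> F \<Longrightarrow> z \<noteq> x \<Longrightarrow> f z = 0"
proof -
  have "completely_regular_space X" using tych unfolding tychonoff_space_def by simp
  moreover have "closedin X (C \<union> (F - {x}))"
    using tych fin C unfolding tychonoff_space_def by (auto intro: closedin_Hausdorff_finite)
  moreover have "x \<notin> C \<union> (F - {x})" using x by simp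
  ultimately obtain f where "f \<in> Cp_set X" "f x = 1" "\<And>z. 0 \<le> f z \<and> f z \<le> 1"
    "\<And>z. z \<in> C \<union> (F - {x}) \<Longrightarrow> f z = 0"
    using Cp_set_bump[of X "C \<union> (F - {x})" x] x(1) by blast
  then show ?thesis using that by blast
qed

definition weighted_barrel :: "'a topology \<Rightarrow> ('a \<Rightarrow> real) \<Rightarrow> (('a \<Rightarrow> real) \<Rightarrow> real) set" where
  "weighted_barrel X w = {\<mu> \<in> tvs_dual (Cp X). \<forall>x\<in>topspace X. \<exists>V. openin X V \<and> x \<in> V \<and>
      (\<forall>f\<in>Cp_set X. (\<forall>z\<in>topspace X - V. f z = 0) \<longrightarrow> w x * \<bar>\<mu> f\<bar> \<le> \<bar>f x\<bar>)}"

lemma weighted_barrel_iff: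
  assumes tych: "tychonoff_space X" and \<mu>: "\<mu> \<in> tvs_dual (Cp X)"
    and fin: "finite F" "F \<subseteq> topspace X" and rep: "\<And>f. f \<in> Cp_set X \<Longrightarrow> \<mu> f = (\<Sum>y\<in>F. a y * f y)"
  shows "\<mu> \<in> weighted_barrel X w \<longleftrightarrow> (\<forall>x\<in>topspace X. w x * \<bar>if x \<in> F then a x else 0\<bar> \<le> 1)"
proof (intro iffI ballI)
  fix x assume "\<mu> \<in> weighted_barrel X w" and x: "x \<in> topspace X"
  then obtain V where V: "openin X V" "x \<in> V"
    and bound: "\<And>f. f \<in> Cp_set X \<Longrightarrow> (\<forall>z\<in>topspace X - V. f z = 0) \<Longrightarrow> w x * \<bar>\<mu> f\<bar> \<le> \<bar>f x\<bar>"
    unfolding weighted_barrel_def by blast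
  obtain f where f: "f \<in> Cp_set X" "f x = 1" "\<And>z. z \<in> topspace X - V \<Longrightarrow> f z = 0"
    "\<And>z. z \<in> F \<Longrightarrow> z \<noteq> x \<Longrightarrow> f z = 0"
    using Cp_set_bump_avoiding_finite[OF tych fin closedin_diff[OF closedin_topspace V(1)] x] V(2)
    by (metis DiffD2)
  show "w x * \<bar>if x \<in> F then a x else 0\<bar> \<le> 1"
    using bound[OF f(1)] f(3) Cp_dual_local_coefficient[OF fin(1) rep f(1,4)] f(2) by simp
next
  assume coeff: "\<forall>x\<in>topspace X. w x * \<bar>if x \<in> F then a x else 0\<bar> \<le> 1"
  show "\<mu> \<in> weighted_barrel X w"
    unfolding weighted_barrel_def
  proof (intro CollectI conjI ballI \<mu>)
    fix x assume x: "x \<in> topspace X"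
    have "openin X (topspace X - (F - {x}))"
      using tych fin unfolding tychonoff_space_def by (auto intro: closedin_Hausdorff_finite)
    moreover have "w x * \<bar>\<mu> f\<bar> \<le> \<bar>f x\<bar>"
      if "f \<in> Cp_set X" "\<forall>z\<in>topspace X - (topspace X - (F - {x})). f z = 0" for f
    proof -
      have "\<mu> f = (if x \<in> F then a x else 0) * f x"
        using that fin(2) by (intro Cp_dual_local_coefficient[OF fin(1) rep]) auto
      then have "w x * \<bar>\<mu> f\<bar> = (w x * \<bar>if x \<in> F then a x else 0\<bar>) * \<bar>f x\<bar>"
        by (simp add: abs_mult)
      also have "\<dots> \<le> 1 * \<bar>f x\<bar>" using coeff x by (intro mult_right_mono) auto
      finally show ?thesis by simp
    qed
    ultimately show "\<exists>V. openin X V \<and> x \<in> V \<and>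
        (\<forall>f\<in>Cp_set X. (\<forall>z\<in>topspace X - V. f z = 0) \<longrightarrow> w x * \<bar>\<mu> f\<bar> \<le> \<bar>f x\<bar>)"
      using x by blast
  qed
qed

lemma absolutely_convex_weighted_barrel:
  assumes w: "\<And>x. w x \<ge> 0"
  shows "absolutely_convex (weighted_barrel X w)"
  unfolding absolutely_convex_def
proof (intro conjI ballI allI impI)
  fix \<mu> \<nu> and t :: real
  assume \<mu>: "\<mu> \<in> weighted_barrel X w" and \<nu>: "\<nu> \<in> weighted_barrel X w" and t: "0 \<le> t \<and> t \<le> 1"
  show "(\<lambda>f. t * \<mu> f + (1 - t) * \<nu> f) \<in> weighted_barrel X w"
    unfolding weighted_barrel_def
  proof (intro CollectI conjI ballI)
    show "(\<lambda>f. t * \<mu> f + (1 - t) * \<nu> f) \<in> tvs_dual (Cp X)"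
      using \<mu> \<nu> unfolding weighted_barrel_def by (intro Cp_dual_lincomb) auto
    fix x assume x: "x \<in> topspace X"
    obtain V where V: "openin X V" "x \<in> V"
      "\<forall>f\<in>Cp_set X. (\<forall>z\<in>topspace X - V. f z = 0) \<longrightarrow> w x * \<bar>\<mu> f\<bar> \<le> \<bar>f x\<bar>"
      using \<mu> x unfolding weighted_barrel_def by blast
    obtain V' where V': "openin X V'" "x \<in> V'"
      "\<forall>f\<in>Cp_set X. (\<forall>z\<in>topspace X - V'. f z = 0) \<longrightarrow> w x * \<bar>\<nu> f\<bar> \<le> \<bar>f x\<bar>"
      using \<nu> x unfolding weighted_barrel_def by blast
    have "w x * \<bar>t * \<mu> f + (1 - t) * \<nu> f\<bar> \<le> \<bar>f x\<bar>"
      if f: "f \<in> Cp_set X" "\<forall>z\<in>topspace X - V \<inter> V'. f z = 0" for f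
    proof -
      have "w x * \<bar>\<mu> f\<bar> \<le> \<bar>f x\<bar>" "w x * \<bar>\<nu> f\<bar> \<le> \<bar>f x\<bar>" using V(3) V'(3) f by auto
      have "\<bar>t * \<mu> f + (1 - t) * \<nu> f\<bar> \<le> t * \<bar>\<mu> f\<bar> + (1 - t) * \<bar>\<nu> f\<bar>"
        using t abs_triangle_ineq[of "t * \<mu> f" "(1 - t) * \<nu> f"] by (simp add: abs_mult)
      then have "w x * \<bar>t * \<mu> f + (1 - t) * \<nu> f\<bar> \<le> w x * (t * \<bar>\<mu> f\<bar> + (1 - t) * \<bar>\<nu> f\<bar>)"
        using w[of x] by (rule mult_left_mono)
      also have "\<dots> = t * (w x * \<bar>\<mu> f\<bar>) + (1 - t) * (w x * \<bar>\<nu> f\<bar>)" by (simp add: algebra_simps)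
      also have "\<dots> \<le> t * \<bar>f x\<bar> + (1 - t) * \<bar>f x\<bar>"
        using t \<open>w x * \<bar>\<mu> f\<bar> \<le> \<bar>f x\<bar>\<close> \<open>w x * \<bar>\<nu> f\<bar> \<le> \<bar>f x\<bar>\<close>
        by (intro add_mono mult_left_mono) auto
      finally show ?thesis by (simp add: algebra_simps)
    qed
    then show "\<exists>V. openin X V \<and> x \<in> V \<and> (\<forall>f\<in>Cp_set X. (\<forall>z\<in>topspace X - V. f z = 0) \<longrightarrow>
        w x * \<bar>t * \<mu> f + (1 - t) * \<nu> f\<bar> \<le> \<bar>f x\<bar>)"
      using V V' by (intro exI[of _ "V \<inter> V'"]) auto
  qed
next
  fix \<mu> and c :: real assume \<mu>: "\<mu> \<in> weighted_barrel X w" and c: "\<bar>c\<bar> \<le> 1"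
  show "fscale c \<mu> \<in> weighted_barrel X w"
    unfolding weighted_barrel_def fscale_def
  proof (intro CollectI conjI ballI)
    show "(\<lambda>f. c * \<mu> f) \<in> tvs_dual (Cp X)"
      using \<mu> unfolding weighted_barrel_def by (intro Cp_dual_cmult_closed) auto
    fix x assume x: "x \<in> topspace X"
    obtain V where V: "openin X V" "x \<in> V"
      "\<forall>f\<in>Cp_set X. (\<forall>z\<in>topspace X - V. f z = 0) \<longrightarrow> w x * \<bar>\<mu> f\<bar> \<le> \<bar>f x\<bar>"
      using \<mu> x unfolding weighted_barrel_def by blast
    have "w x * \<bar>c * \<mu> f\<bar> \<le> \<bar>f x\<bar>" if "f \<in> Cp_set X" "\<forall>z\<in>topspace X - V. f z = 0" for f
    proof -
      have "w x * \<bar>c * \<mu> f\<bar> = \<bar>c\<bar> * (w x * \<bar>\<mu> f\<bar>)" by (simp add: abs_mult)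
      also have "\<dots> \<le> 1 * (w x * \<bar>\<mu> f\<bar>)" using c w[of x] by (intro mult_right_mono) auto
      finally show ?thesis using V(3) that by auto
    qed
    then show "\<exists>V. openin X V \<and> x \<in> V \<and>
        (\<forall>f\<in>Cp_set X. (\<forall>z\<in>topspace X - V. f z = 0) \<longrightarrow> w x * \<bar>c * \<mu> f\<bar> \<le> \<bar>f x\<bar>)"
      using V by blast
  qed
qed

lemma weighted_barrel_absorbing:
  assumes tych: "tychonoff_space X" and w: "\<And>x. w x \<ge> 0" and \<mu>: "\<mu> \<in> tvs_dual (Cp X)"
  shows "\<exists>r>0. \<forall>c. r \<le> \<bar>c\<bar> \<longrightarrow> \<mu> \<in> fscale c ` weighted_barrel X w"
proof -
  obtain F a where F: "finite F" "F \<subseteq> topspace X"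
    and rep: "\<And>f. f \<in> Cp_set X \<Longrightarrow> \<mu> f = (\<Sum>y\<in>F. a y * f y)"
    using Cp_dual_finite_combination[OF tych \<mu>] by blast
  define r where "r = 1 + (\<Sum>y\<in>F. w y * \<bar>a y\<bar>)"
  have wa: "w x * \<bar>a x\<bar> \<le> (\<Sum>y\<in>F. w y * \<bar>a y\<bar>)" if "x \<in> F" for x
    using F(1) that w by (intro member_le_sum) auto
  have "0 \<le> (\<Sum>y\<in>F. w y * \<bar>a y\<bar>)" using w by (intro sum_nonneg) auto
  then have "r > 0" unfolding r_def by simp
  moreover have "\<mu> \<in> fscale c ` weighted_barrel X w" if c: "r \<le> \<bar>c\<bar>" for c
  proof -
    have "c \<noteq> 0" using c \<open>r > 0\<close> by auto
    define \<nu> where "\<nu> = (\<lambda>f. (1 / c) * \<mu> f)"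
    have \<nu>: "\<nu> \<in> tvs_dual (Cp X)" unfolding \<nu>_def using \<mu> by (rule Cp_dual_cmult_closed)
    have rep\<nu>: "\<nu> f = (\<Sum>y\<in>F. (a y / c) * f y)" if "f \<in> Cp_set X" for f
      unfolding \<nu>_def using rep[OF that] by (simp add: sum_distrib_left)
    have "w x * \<bar>if x \<in> F then a x / c else 0\<bar> \<le> 1" if "x \<in> topspace X" for x
    proof (cases "x \<in> F")
      case True
      have "w x * \<bar>a x\<bar> \<le> \<bar>c\<bar>" using wa[OF True] c unfolding r_def by simp
      then show ?thesis using True \<open>c \<noteq> 0\<close> by (simp add: abs_divide field_simps)
    qed simp
    then have "\<nu> \<in> weighted_barrel X w" using weighted_barrel_iff[OF tych \<nu> F rep\<nu>] by simp
    moreover have "\<mu> = fscale c \<nu>" unfolding \<nu>_def fscale_def using \<open>c \<noteq> 0\<close> by simp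
    ultimately show ?thesis by blast
  qed
  ultimately show ?thesis by blast
qed

lemma closedin_weighted_barrel:
  assumes tych: "tychonoff_space X" and w: "\<And>x. w x > 0"
  shows "closedin (strong_dual_topology (Cp X)) (weighted_barrel X w)"
  unfolding closedin_def topspace_strong_dual
proof
  show "weighted_barrel X w \<subseteq> tvs_dual (Cp X)" unfolding weighted_barrel_def by blast
  define B where "B = {f \<in> Cp_set X. \<forall>z. \<bar>f z\<bar> \<le> 1}"
  have B: "tvs_bounded (Cp X) B" unfolding B_def by (rule tvs_bounded_CpI) auto
  have "zero_fun \<in> B" unfolding B_def using Cp_set_zero[of X] by (simp add: zero_fun_def)
  then have "B \<noteq> {}" by blast
  show "openin (strong_dual_topology (Cp X)) (tvs_dual (Cp X) - weighted_barrel X w)"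
  proof (subst openin_subopen, intro ballI)
    fix \<mu> assume "\<mu> \<in> tvs_dual (Cp X) - weighted_barrel X w"
    then have \<mu>: "\<mu> \<in> tvs_dual (Cp X)" "\<mu> \<notin> weighted_barrel X w" by auto
    obtain F a where F: "finite F" "F \<subseteq> topspace X"
      and rep: "\<And>f. f \<in> Cp_set X \<Longrightarrow> \<mu> f = (\<Sum>y\<in>F. a y * f y)"
      using Cp_dual_finite_combination[OF tych \<mu>(1)] by blast
    define coeff where "coeff x = (if x \<in> F then a x else 0)" for x
    obtain x where x: "x \<in> topspace X" and big: "1 < w x * \<bar>coeff x\<bar>"
      using \<mu> weighted_barrel_iff[OF tych \<mu>(1) F rep] unfolding coeff_def by force
    text \<open>Functionals close to \<open>\<mu>\<close> uniformly on \<open>B\<close> have a coefficient at \<open>x\<close>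
      close to \<open>coeff x\<close>, hence also too large for the barrel.\<close>
    define \<delta> where "\<delta> = \<bar>coeff x\<bar> - 1 / w x"
    have "\<delta> > 0" unfolding \<delta>_def using big w[of x] by (simp add: field_simps)
    have "strong_ball (Cp X) \<mu> B \<delta> \<subseteq> tvs_dual (Cp X) - weighted_barrel X w"
    proof
      fix \<psi> assume "\<psi> \<in> strong_ball (Cp X) \<mu> B \<delta>"
      then obtain c where \<psi>: "\<psi> \<in> tvs_dual (Cp X)" and c: "c < \<delta>" "\<forall>f\<in>B. \<bar>\<psi> f - \<mu> f\<bar> \<le> c"
        using Cp_strong_ball_iff[OF tych \<mu>(1) B \<open>B \<noteq> {}\<close>] by blast
      obtain G b where G: "finite G" "G \<subseteq> topspace X"
        and rep\<psi>: "\<And>f. f \<in> Cp_set X \<Longrightarrow> \<psi> f = (\<Sum>y\<in>G. b y * f y)"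
        using Cp_dual_finite_combination[OF tych \<psi>] by blast
      obtain f where f: "f \<in> Cp_set X" "f x = 1" "\<And>z. 0 \<le> f z \<and> f z \<le> 1"
        "\<And>z. z \<in> F \<union> G \<Longrightarrow> z \<noteq> x \<Longrightarrow> f z = 0"
        using Cp_set_bump_avoiding_finite[OF tych _ _ closedin_empty x] F G
        by (metis empty_iff finite_UnI le_sup_iff)
      have "\<And>z. z \<in> F \<Longrightarrow> z \<noteq> x \<Longrightarrow> f z = 0" "\<And>z. z \<in> G \<Longrightarrow> z \<noteq> x \<Longrightarrow> f z = 0"
        using f(4) by auto
      then have "\<mu> f = coeff x * f x" "\<psi> f = (if x \<in> G then b x else 0) * f x"
        unfolding coeff_def
        by (intro Cp_dual_local_coefficient[OF F(1) rep f(1)] Cp_dual_local_coefficient[OF G(1) rep\<psi> f(1)];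
            blast)+
      then have "\<mu> f = coeff x" "\<psi> f = (if x \<in> G then b x else 0)" using f(2) by simp_all
      moreover have "f \<in> B" unfolding B_def using f by auto
      ultimately have "\<bar>(if x \<in> G then b x else 0) - coeff x\<bar> < \<delta>" using c by fastforce
      then have "1 / w x < \<bar>if x \<in> G then b x else 0\<bar>" unfolding \<delta>_def by linarith
      then have "1 < w x * \<bar>if x \<in> G then b x else 0\<bar>"
        using w[of x] by (simp add: divide_less_eq mult.commute)
      then have "\<psi> \<notin> weighted_barrel X w" using weighted_barrel_iff[OF tych \<psi> G rep\<psi>] x by force
      then show "\<psi> \<in> tvs_dual (Cp X) - weighted_barrel X w" using \<psi> by blast
    qed
    moreover have "\<mu> \<in> strong_ball (Cp X) \<mu> B \<delta>"
      unfolding Cp_strong_ball_iff[OF tych \<mu>(1) B \<open>B \<noteq> {}\<close>] using \<mu>(1) \<open>\<delta> > 0\<close>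
      by (intro conjI exI[of _ 0]) simp_all
    ultimately show "\<exists>T. openin (strong_dual_topology (Cp X)) T \<and> \<mu> \<in> T
        \<and> T \<subseteq> tvs_dual (Cp X) - weighted_barrel X w"
      using openin_strong_ball[OF \<mu>(1) B \<open>B \<noteq> {}\<close> \<open>\<delta> > 0\<close>] by blast
  qed
qed

lemma barrel_weighted_barrel:
  assumes tych: "tychonoff_space X" and w: "\<And>x. w x > 0"
  shows "barrel (strong_dual_topology (Cp X)) (weighted_barrel X w)"
proof -
  have w0: "\<And>x. w x \<ge> 0" using w less_imp_le by blast
  have "absolutely_convex (weighted_barrel X w)" using w0 by (rule absolutely_convex_weighted_barrel)
  moreover have "weighted_barrel X w \<subseteq> tvs_dual (Cp X)" unfolding weighted_barrel_def by blast
  moreover have "closedin (strong_dual_topology (Cp X)) (weighted_barrel X w)"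
    using tych w by (rule closedin_weighted_barrel)
  moreover have "\<forall>\<mu>\<in>tvs_dual (Cp X). \<exists>r>0. \<forall>c. r \<le> \<bar>c\<bar> \<longrightarrow> \<mu> \<in> fscale c ` weighted_barrel X w"
    using weighted_barrel_absorbing[of X w] tych w0 by blast
  ultimately show ?thesis
    unfolding barrel_def absolutely_convex_def topspace_strong_dual by blast
qed

lemma weighted_barrel_ball_large_values:
  assumes tych: "tychonoff_space X" and w: "\<And>x. w x > 0"
    and B: "tvs_bounded (Cp X) B" "B \<noteq> {}" and "\<eta> > 0"
    and ball: "strong_ball (Cp X) zero_fun B \<eta> \<subseteq> weighted_barrel X w"
    and x: "x \<in> topspace X"
  shows "\<exists>f\<in>B. w x * \<eta> / 4 < \<bar>f x\<bar>"
proof (rule ccontr)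
  assume "\<not> (\<exists>f\<in>B. w x * \<eta> / 4 < \<bar>f x\<bar>)"
  then have small: "\<bar>f x\<bar> \<le> w x * \<eta> / 4" if "f \<in> B" for f using that by force
  text \<open>Then \<open>(2 / w x) \<cdot> \<delta>\<^sub>x\<close> lies in the ball, but its coefficient at \<open>x\<close> is too large.\<close>
  define t where "t = 2 / w x"
  have "t > 0" unfolding t_def using w[of x] by simp
  define \<psi> where "\<psi> = (\<lambda>f. t * dirac X x f)"
  have \<psi>: "\<psi> \<in> tvs_dual (Cp X)" unfolding \<psi>_def by (rule Cp_dual_cmult_closed[OF dirac_in_Cp_dual])
  have "\<bar>\<psi> f - zero_fun f\<bar> \<le> \<eta> / 2" if "f \<in> B" for f
  proof -
    have "f \<in> Cp_set X" using tvs_bounded_Cp_subset[OF B(1)] that by blast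
    then have "\<bar>\<psi> f - zero_fun f\<bar> = t * \<bar>f x\<bar>"
      using \<open>t > 0\<close> by (simp add: \<psi>_def dirac_def zero_fun_def abs_mult)
    also have "\<dots> \<le> t * (w x * \<eta> / 4)" using small[OF that] \<open>t > 0\<close> by simp
    also have "\<dots> = \<eta> / 2" unfolding t_def using w[of x] by simp
    finally show ?thesis .
  qed
  then have "\<psi> \<in> strong_ball (Cp X) zero_fun B \<eta>"
    unfolding Cp_strong_ball_iff[OF tych zero_fun_in_Cp_dual B] using \<psi> \<open>\<eta> > 0\<close>
    by (intro conjI exI[of _ "\<eta> / 2"]) auto
  then have "\<psi> \<in> weighted_barrel X w" using ball by blast
  moreover have "\<psi> f = (\<Sum>y\<in>{x}. t * f y)" if "f \<in> Cp_set X" for f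
    using that by (simp add: \<psi>_def dirac_def)
  ultimately have "\<forall>y\<in>topspace X. w y * \<bar>if y \<in> {x} then t else 0\<bar> \<le> 1"
    using weighted_barrel_iff[OF tych \<psi>, of "{x}" "\<lambda>_. t"] x by simp
  then have "w x * \<bar>t\<bar> \<le> 1" using x by force
  then show False using \<open>t > 0\<close> w[of x] unfolding t_def by simp
qed

lemma point_finite_expansion_of_bounded:
  assumes B: "tvs_bounded (Cp X) B" and "\<epsilon> > 0"
    and large: "\<And>n x. x \<in> D n \<Longrightarrow> \<exists>f\<in>B. (real n + 1) * \<epsilon> < \<bar>f x\<bar>"
  shows "point_finite_open_expansion_seq X D"
proof -
  define U where "U n = (\<Union>f\<in>B. {z \<in> topspace X. \<bar>f z\<bar> \<in> {(real n + 1) * \<epsilon><..}})" for n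
  show ?thesis
  proof (rule point_finite_open_expansion_seqI[of X U])
    fix n
    have "openin X {z \<in> topspace X. \<bar>f z\<bar> \<in> {(real n + 1) * \<epsilon><..}}" if "f \<in> B" for f
    proof (rule openin_continuous_map_preimage)
      show "continuous_map X euclideanreal (\<lambda>z. \<bar>f z\<bar>)"
        using Cp_setD(1) tvs_bounded_Cp_subset[OF B] that by (intro continuous_map_real_abs) auto
    qed simp
    then show "openin X (U n)" unfolding U_def by (intro openin_Union) blast
    show "D n \<subseteq> U n"
    proof
      fix x assume "x \<in> D n"
      then obtain f where f: "f \<in> B" "(real n + 1) * \<epsilon> < \<bar>f x\<bar>" using large by blast
      have "x \<in> topspace X"
      proof (rule ccontr)
        assume "x \<notin> topspace X"
        moreover have "f \<in> Cp_set X" using tvs_bounded_Cp_subset[OF B] f(1) by blast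
        ultimately have "f x = 0" by (simp add: Cp_setD(2))
        moreover have "(real n + 1) * \<epsilon> > 0" using \<open>\<epsilon> > 0\<close> by simp
        ultimately show False using f(2) by simp
      qed
      then show "x \<in> U n" unfolding U_def using f by blast
    qed
  next
    fix z
    obtain M where M: "\<forall>f\<in>B. \<bar>f z\<bar> \<le> M" using tvs_bounded_Cp_pointwise[OF B] by blast
    have "{n. z \<in> U n} \<subseteq> {..nat \<lceil>M / \<epsilon>\<rceil>}"
    proof
      fix n assume "n \<in> {n. z \<in> U n}"
      then obtain f where f: "f \<in> B" "(real n + 1) * \<epsilon> < \<bar>f z\<bar>" unfolding U_def by blast
      have "\<bar>f z\<bar> \<le> M" using M f(1) by blast
      moreover have "(real n + 1) * \<epsilon> = real n * \<epsilon> + \<epsilon>" by (simp add: algebra_simps)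
      ultimately have "real n * \<epsilon> < M" using f(2) \<open>\<epsilon> > 0\<close> by linarith
      then have "real n < M / \<epsilon>" using \<open>\<epsilon> > 0\<close> by (simp add: less_divide_eq)
      then have "real n < real (nat \<lceil>M / \<epsilon>\<rceil>)" using real_nat_ceiling_ge[of "M / \<epsilon>"] by linarith
      then show "n \<in> {..nat \<lceil>M / \<epsilon>\<rceil>}" by simp
    qed
    then show "finite {n. z \<in> U n}" using finite_subset by blast
  qed
qed

lemma distinguished_Cp_imp_partition_expansions:
  assumes tych: "tychonoff_space X" and dist: "distinguished (Cp X)"
    and D: "disjoint_family D" "\<Union>(range D) = topspace X"
  shows "point_finite_open_expansion_seq X D"
proof -
  define w where "w x = real (LEAST n. x \<in> D n) + 1" for x
  have w_pos: "w x > 0" for x unfolding w_def by simp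
  have w_D: "w x = real n + 1" if "x \<in> D n" for x n
  proof -
    have "(LEAST n. x \<in> D n) = n"
    proof (rule Least_equality)
      show "n \<le> m" if "x \<in> D m" for m
        using D(1) \<open>x \<in> D n\<close> that unfolding disjoint_family_on_def by (cases "m = n") auto
    qed (rule that)
    then show ?thesis unfolding w_def by simp
  qed
  have "barrel (strong_dual_topology (Cp X)) (weighted_barrel X w)"
    using tych w_pos by (rule barrel_weighted_barrel)
  then obtain U where "openin (strong_dual_topology (Cp X)) U" "zero_fun \<in> U" "U \<subseteq> weighted_barrel X w"
    using dist unfolding distinguished_def barrelled_def by blast
  then obtain B \<eta> where B: "tvs_bounded (Cp X) B" "B \<noteq> {}" "\<eta> > 0"
    and ball: "strong_ball (Cp X) zero_fun B \<eta> \<subseteq> weighted_barrel X w"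
    using Cp_strong_open_contains_ball[OF tych] by (metis subset_trans)
  show ?thesis
  proof (rule point_finite_expansion_of_bounded[OF B(1)])
    show "\<eta> / 4 > 0" using \<open>\<eta> > 0\<close> by simp
    fix n x assume "x \<in> D n"
    moreover have "x \<in> topspace X" using D(2) \<open>x \<in> D n\<close> by blast
    ultimately show "\<exists>f\<in>B. (real n + 1) * (\<eta> / 4) < \<bar>f x\<bar>"
      using weighted_barrel_ball_large_values[OF tych w_pos B ball] w_D by force
  qed
qed

lemma distinguished_Cp_iff_partition_expansions:
  assumes tych: "tychonoff_space X"
  shows "distinguished (Cp X) \<longleftrightarrow> (\<forall>D :: nat \<Rightarrow> 'a set. disjoint_family D
      \<and> \<Union>(range D) = topspace X \<longrightarrow> point_finite_open_expansion_seq X D)"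
proof
  assume "distinguished (Cp X)"
  then show "\<forall>D :: nat \<Rightarrow> 'a set. disjoint_family D \<and> \<Union>(range D) = topspace X
      \<longrightarrow> point_finite_open_expansion_seq X D"
    using distinguished_Cp_imp_partition_expansions[OF tych] by blast
next
  assume "\<forall>D :: nat \<Rightarrow> 'a set. disjoint_family D \<and> \<Union>(range D) = topspace X
      \<longrightarrow> point_finite_open_expansion_seq X D"
  then show "distinguished (Cp X)"
    by (intro distinguished_Cp_if_partition_expansions[OF tych]) simp
qed

theorem theorem2p1:
  fixes X :: "'a topology"
  assumes "tychonoff_space X" and "infinite (topspace X)"
  shows "(distinguished (Cp X) \<longleftrightarrow>
           (\<forall>\<P>. countable \<P> \<and> disjoint \<P> \<and> \<Union>\<P> = topspace X
                 \<longrightarrow> point_finite_open_expansion X \<P>))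
       \<and> ((\<forall>\<P>. countable \<P> \<and> disjoint \<P> \<and> \<Union>\<P> = topspace X
                 \<longrightarrow> point_finite_open_expansion X \<P>) \<longleftrightarrow>
           (\<forall>\<P>. countable \<P> \<and> disjoint \<P> \<and> \<Union>\<P> \<subseteq> topspace X
                 \<longrightarrow> point_finite_open_expansion X \<P>))
       \<and> ((\<forall>\<P>. countable \<P> \<and> disjoint \<P> \<and> \<Union>\<P> \<subseteq> topspace X
                 \<longrightarrow> point_finite_open_expansion X \<P>) \<longleftrightarrow> Delta_space X)"
proof -
  note partitions = disjoint_expansions_iff_seq[of "\<lambda>S. S = topspace X" X]
  note disjoint = disjoint_expansions_iff_seq[of "\<lambda>S. S \<subseteq> topspace X" X]
  show ?thesis
    using distinguished_Cp_iff_partition_expansions[OF assms(1)]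
      partition_expansions_iff_disjoint_expansions[of X] expansion_seq_iff_Delta_space[of X]
    unfolding partitions disjoint by (intro conjI) simp_all
qed

end
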